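(* Let $T>0$ and $u\in L^\infty(\mathbb{R})$ real-valued and $T$-periodic. For all $s>0$ and fixed $x\in\mathbb{R}$, $$\psi^+(x,\lambda)=e^{i\sqrt\lambda x}\Big(1+\frac{1}{2i\sqrt\lambda}\int_0^xu(t)\,dt+O(\lambda^{-1})\Big),\quad \psi^-(x,\lambda)=e^{-i\sqrt\lambda x}\Big(1-\frac{1}{2i\sqrt\lambda}\int_0^xu(t)\,dt+O(\lambda^{-1})\Big),$$ $$\partial_x\psi^+(x,\lambda)=e^{i\sqrt\lambda x}\big(i\sqrt\lambda+O(1)\big),\qquad \partial_x\psi^-(x,\lambda)=e^{-i\sqrt\lambda x}\big(-i\sqrt\lambda+O(1)\big),$$ as $\lambda\to\infty$ with $\lambda\in\Omega_s$.
   Context: $y_1,y_2$: solutions of $-y''+uy=\lambda y$ with $y_1(0)=1,y_1'(0)=0,y_2(0)=0,y_2'(0)=1$; $\Delta(\lambda)=y_1(T,\lambda)+y_2'(T,\lambda)$; $\sigma(L)=\{\lambda\in\mathbb{R}:\Delta(\lambda)\in[-2,2]\}$. $\rho(\lambda)$: root of $\rho^2-\Delta(\lambda)\rho+1=0$ analytic on $\mathbb{C}\setminus\sigma(L)$ with $|\rho|<1$ there. Bloch--Floquet solutions $\psi^\pm(x,\lambda)=y_1(x,\lambda)+\frac{\rho(\lambda)^{\pm1}-y_1(T,\lambda)}{y_2(T,\lambda)}y_2(x,\lambda)$. $\sqrt\lambda$ is defined with $\arg\lambda\in[0,2\pi)$ (so it lies in the upper half plane off $[0,\infty)$); $\Omega_s=\{\lambda\in\mathbb{C}:s<\arg\lambda<2\pi-s\}$.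 *)

theory Defs
  imports "HOL-Analysis.Analysis" "HOL-Library.Landau_Symbols"
begin

text \<open>Square root with the branch cut along [0,\<infinity>): arg of the argument taken in [0,2\<pi>),
  so the root has arg in [0,\<pi>).\<close>
definition sqrt_cut :: "complex \<Rightarrow> complex" where
  "sqrt_cut z = (if Im z \<ge> 0 then csqrt z else - csqrt z)"

definition arg2pi :: "complex \<Rightarrow> real" where
  "arg2pi z = (if Arg z < 0 then Arg z + 2 * pi else Arg z)"

definition Omega :: "real \<Rightarrow> complex set" where
  "Omega s = {z. s < arg2pi z \<and> arg2pi z < 2 * pi - s}"

text \<open>Hill discriminant and spectrum, given the fundamental solutions
  (y1 x \<lambda>, its x-derivative y1' x \<lambda>) and (y2, y2').\<close>
definition Delta :: "real \<Rightarrow> (real \<Rightarrow> complex \<Rightarrow> complex) \<Rightarrow> (real \<Rightarrow> complex \<Rightarrow> complex)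
    \<Rightarrow> complex \<Rightarrow> complex" where
  "Delta T y1 y2' l = y1 T l + y2' T l"

definition spec :: "real \<Rightarrow> (real \<Rightarrow> complex \<Rightarrow> complex) \<Rightarrow> (real \<Rightarrow> complex \<Rightarrow> complex)
    \<Rightarrow> complex set" where
  "spec T y1 y2' = {complex_of_real r | r. Delta T y1 y2' (complex_of_real r)
                     \<in> complex_of_real ` {-2..2}}"

text \<open>Solution of -y'' + u y = \<lambda> y with y(0)=a, y'(0)=b, in the Caratheodory sense
  (u only bounded measurable): y, y' continuous and
  y x = a + \<integral>_0^x y', y' x = b + \<integral>_0^x (u - \<lambda>) y.\<close>
definition is_sol :: "(real \<Rightarrow> real) \<Rightarrow> complex \<Rightarrow> complex \<Rightarrow> complex
    \<Rightarrow> (real \<Rightarrow> complex) \<Rightarrow> (real \<Rightarrow> complex) \<Rightarrow> bool" where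
  "is_sol u l a b y y' \<longleftrightarrow> continuous_on UNIV y \<and> continuous_on UNIV y' \<and>
     (\<forall>x. y x = a + (LBINT t=ereal 0..ereal x. y' t)) \<and>
     (\<forall>x. y' x = b + (LBINT t=ereal 0..ereal x. (complex_of_real (u t) - l) * y t))"

definition psi_plus where
  "psi_plus T rho y1 y2 x l = y1 x l + (rho l - y1 T l) / y2 T l * y2 x l"

definition psi_minus where
  "psi_minus T rho y1 y2 x l = y1 x l + (inverse (rho l) - y1 T l) / y2 T l * y2 x l"

definition dpsi_plus where
  "dpsi_plus T rho y1 y2 y1' y2' x l = y1' x l + (rho l - y1 T l) / y2 T l * y2' x l"

definition dpsi_minus where
  "dpsi_minus T rho y1 y2 y1' y2' x l = y1' x l + (inverse (rho l) - y1 T l) / y2 T l * y2' x l"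

definition Omega_filter :: "real \<Rightarrow> complex filter" where
  "Omega_filter s = inf at_infinity (principal (Omega s))"

end

theory Submission
  imports Defs
begin

text \<open>Write \<open>\<lambda> = k\<^sup>2\<close> with \<open>k = sqrt_cut \<lambda>\<close>; on \<open>\<Omega>\<^sub>s\<close> one has \<open>Im k \<ge> c \<bar>k\<bar>\<close> for some \<open>c > 0\<close>.
  For large \<open>Im k\<close> a contraction argument, in the space of functions bounded by \<open>C exp \<bar>t\<bar>\<close>,
  yields a solution \<open>f x = exp (\<i> k x) m x\<close> of \<open>-f'' + u f = \<lambda> f\<close> with
  \<open>m x = 1 + (\<integral>\<^sub>0\<^sup>x u) / (2 \<i> k) + O(\<bar>k\<bar>\<^sup>-\<^sup>2)\<close> locally uniformly in \<open>x\<close>. Uniqueness of the fixed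
  point and periodicity of \<open>u\<close> give \<open>f (x + T) = \<mu> f x\<close> with \<open>\<bar>\<mu>\<bar> < 1\<close>; the same construction for
  the reflected potential \<open>u (-t)\<close> gives a second Floquet solution, with multiplier of modulus
  \<open>> 1\<close>. Hence \<open>\<Delta> \<lambda> \<notin> [-2, 2]\<close>, \<open>\<rho> \<lambda> = \<mu>\<close>, and \<open>\<psi>\<^sup>+\<close>, \<open>\<psi>\<^sup>-\<close> are these two Floquet solutions
  normalized to 1 at \<open>x = 0\<close>, so their asymptotics are those of \<open>m\<close>.\<close>

section \<open>Integrals of locally bounded functions\<close>

definition ivl_integral :: "real \<Rightarrow> real \<Rightarrow> (real \<Rightarrow> complex) \<Rightarrow> complex" where
  "ivl_integral a b f = (LBINT t=ereal a..ereal b. f t)"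

definition loc_bounded :: "(real \<Rightarrow> complex) \<Rightarrow> bool" where
  "loc_bounded f \<longleftrightarrow> f \<in> borel_measurable borel \<and> (\<forall>a b. \<exists>C. \<forall>t\<in>{a..b}. norm (f t) \<le> C)"

lemma loc_boundedD: "loc_bounded f \<Longrightarrow> \<exists>C. \<forall>t\<in>{a..b}. norm (f t) \<le> C"
  unfolding loc_bounded_def by blast

lemma loc_bounded_continuous: "continuous_on UNIV f \<Longrightarrow> loc_bounded f"
proof -
  assume c: "continuous_on UNIV f"
  have "\<exists>C. \<forall>t\<in>{a..b}. norm (f t) \<le> C" for a b
  proof -
    have "compact (f ` {a..b})"
      by (rule compact_continuous_image[OF continuous_on_subset[OF c] compact_Icc]) auto
    then obtain C where "\<forall>y\<in>f ` {a..b}. norm y \<le> C" using compact_imp_bounded bounded_iff by metis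
    then show ?thesis by auto
  qed
  with c show ?thesis unfolding loc_bounded_def by (auto intro: borel_measurable_continuous_onI)
qed

lemma loc_bounded_const: "loc_bounded (\<lambda>_. c)"
  by (rule loc_bounded_continuous) (rule continuous_on_const)

lemma loc_bounded_globally_bounded:
  "f \<in> borel_measurable borel \<Longrightarrow> (\<And>t. norm (f t) \<le> C) \<Longrightarrow> loc_bounded f"
  unfolding loc_bounded_def by auto

lemma loc_bounded_add: "loc_bounded f \<Longrightarrow> loc_bounded g \<Longrightarrow> loc_bounded (\<lambda>t. f t + g t)"
  unfolding loc_bounded_def
proof (elim conjE, intro conjI allI)
  fix a b assume "\<forall>a b. \<exists>C. \<forall>t\<in>{a..b}. norm (f t) \<le> C" "\<forall>a b. \<exists>C. \<forall>t\<in>{a..b}. norm (g t) \<le> C"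
  then obtain C1 C2 where "\<forall>t\<in>{a..b}. norm (f t) \<le> C1" "\<forall>t\<in>{a..b}. norm (g t) \<le> C2" by metis
  then show "\<exists>C. \<forall>t\<in>{a..b}. norm (f t + g t) \<le> C"
    by (intro exI[of _ "C1 + C2"]) (auto intro: norm_triangle_le add_mono)
qed auto

lemma loc_bounded_mult: "loc_bounded f \<Longrightarrow> loc_bounded g \<Longrightarrow> loc_bounded (\<lambda>t. f t * g t)"
  unfolding loc_bounded_def
proof (elim conjE, intro conjI allI)
  fix a b assume "\<forall>a b. \<exists>C. \<forall>t\<in>{a..b}. norm (f t) \<le> C" "\<forall>a b. \<exists>C. \<forall>t\<in>{a..b}. norm (g t) \<le> C"
  then obtain C1 C2 where "\<forall>t\<in>{a..b}. norm (f t) \<le> C1" "\<forall>t\<in>{a..b}. norm (g t) \<le> C2" by metis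
  then show "\<exists>C. \<forall>t\<in>{a..b}. norm (f t * g t) \<le> C"
    by (intro exI[of _ "C1 * C2"]) (auto simp: norm_mult intro: mult_mono' order_trans[OF norm_ge_zero])
qed auto

lemma loc_bounded_cmult: "loc_bounded f \<Longrightarrow> loc_bounded (\<lambda>t. c * f t)"
  by (rule loc_bounded_mult[OF loc_bounded_const])

lemma loc_bounded_diff: "loc_bounded f \<Longrightarrow> loc_bounded g \<Longrightarrow> loc_bounded (\<lambda>t. f t - g t)"
  using loc_bounded_add[of f "\<lambda>t. -1 * g t"] loc_bounded_cmult[of g "-1"] by simp

lemmas loc_bounded_intros =
  loc_bounded_add loc_bounded_diff loc_bounded_mult loc_bounded_cmult loc_bounded_const

lemma loc_bounded_reflect: "loc_bounded f \<Longrightarrow> loc_bounded (\<lambda>t. f (- t))"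
proof -
  assume f: "loc_bounded f"
  then have [measurable]: "f \<in> borel_measurable borel" unfolding loc_bounded_def by blast
  have "\<exists>C. \<forall>t\<in>{a..b}. norm (f (- t)) \<le> C" for a b
    using loc_boundedD[OF f, of "- b" "- a"] by (metis atLeastAtMost_iff neg_le_iff_le)
  moreover have "(\<lambda>t. f (- t)) \<in> borel_measurable borel" by measurable
  ultimately show ?thesis unfolding loc_bounded_def by blast
qed

lemma loc_bounded_set_integrable: "loc_bounded f \<Longrightarrow> set_integrable lborel {a..b} f"
proof -
  assume l: "loc_bounded f"
  then have [measurable]: "f \<in> borel_measurable borel" unfolding loc_bounded_def by auto
  obtain C where C: "\<forall>t\<in>{a..b}. norm (f t) \<le> C" using loc_boundedD[OF l] by blast
  show ?thesis
  proof (rule set_integrable_bound[of lborel "{a..b}" "\<lambda>_. C"])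
    show "set_integrable lborel {a..b} (\<lambda>_. C)"
      by (rule borel_integrable_atLeastAtMost') (auto intro: continuous_on_const)
    show "set_borel_measurable lborel {a..b} f"
      unfolding set_borel_measurable_def by measurable
    show "AE x in lborel. x \<in> {a..b} \<longrightarrow> norm (f x) \<le> norm C"
      using C by (intro AE_I2) (auto intro: order_trans[OF _ abs_ge_self])
  qed
qed

lemma loc_bounded_ivl_integrable:
  "loc_bounded f \<Longrightarrow> interval_lebesgue_integrable lborel (ereal a) (ereal b) f"
  unfolding interval_lebesgue_integrable_def
  by (auto intro: set_integrable_subset[OF loc_bounded_set_integrable[of f a b]]
                  set_integrable_subset[OF loc_bounded_set_integrable[of f b a]])

lemma ivl_integral_add:
  "loc_bounded f \<Longrightarrow> loc_bounded g \<Longrightarrow>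
    ivl_integral a b (\<lambda>t. f t + g t) = ivl_integral a b f + ivl_integral a b g"
  unfolding ivl_integral_def by (intro interval_lebesgue_integral_add(2) loc_bounded_ivl_integrable)

lemma ivl_integral_diff:
  "loc_bounded f \<Longrightarrow> loc_bounded g \<Longrightarrow>
    ivl_integral a b (\<lambda>t. f t - g t) = ivl_integral a b f - ivl_integral a b g"
  unfolding ivl_integral_def by (intro interval_lebesgue_integral_diff(2) loc_bounded_ivl_integrable)

lemma ivl_integral_cmult: "ivl_integral a b (\<lambda>t. c * f t) = c * ivl_integral a b f"
  unfolding ivl_integral_def by simp

lemma ivl_integral_multc: "ivl_integral a b (\<lambda>t. f t * c) = ivl_integral a b f * c"
  unfolding ivl_integral_def by simp

lemma ivl_integral_uminus: "ivl_integral a b (\<lambda>t. - f t) = - ivl_integral a b f"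
  unfolding ivl_integral_def by (rule interval_lebesgue_integral_uminus)

lemma ivl_integral_same [simp]: "ivl_integral a a f = 0"
  unfolding ivl_integral_def by (simp add: interval_lebesgue_integral_def set_lebesgue_integral_def)

lemma ivl_integral_swap: "ivl_integral a b f = - ivl_integral b a f"
  unfolding ivl_integral_def by (rule interval_integral_endpoints_reverse)

lemma ivl_integral_combine: "loc_bounded f \<Longrightarrow> ivl_integral a b f + ivl_integral b c f = ivl_integral a c f"
  unfolding ivl_integral_def
  by (rule interval_integral_sum)
     (cases "a \<le> b"; cases "b \<le> c"; cases "a \<le> c"; auto simp: min_def max_def intro: loc_bounded_ivl_integrable)

lemma ivl_integral_Icc: "a \<le> b \<Longrightarrow> ivl_integral a b f = (LINT t:{a..b}|lborel. f t)"
  unfolding ivl_integral_def by (rule interval_integral_Icc)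

lemma ivl_integral_has_integral:
  "loc_bounded f \<Longrightarrow> a \<le> b \<Longrightarrow> (f has_integral ivl_integral a b f) {a..b}"
  unfolding ivl_integral_def
  using interval_integral_eq_integral[of a b f] loc_bounded_set_integrable[of f a b]
        set_borel_integral_eq_integral[of "{a..b}" f] by auto

lemma ivl_integral_cong:
  "(\<And>t. min a b \<le> t \<Longrightarrow> t \<le> max a b \<Longrightarrow> f t = g t) \<Longrightarrow> ivl_integral a b f = ivl_integral a b g"
  unfolding ivl_integral_def
  by (rule interval_integral_cong) (auto simp: einterval_iff min_def max_def split: if_splits)

lemma ivl_integral_cong_AE:
  "f \<in> borel_measurable borel \<Longrightarrow> g \<in> borel_measurable borel \<Longrightarrow> AE t in lborel. f t = g t \<Longrightarrow>
    ivl_integral a b f = ivl_integral a b g"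
  unfolding ivl_integral_def by (rule interval_integral_cong_AE) (auto elim: eventually_mono)

lemma ivl_integral_norm_bound:
  assumes "loc_bounded f" "\<And>t. min a b \<le> t \<Longrightarrow> t \<le> max a b \<Longrightarrow> norm (f t) \<le> C"
  shows "norm (ivl_integral a b f) \<le> C * \<bar>b - a\<bar>"
proof -
  have *: "norm (ivl_integral a b f) \<le> C * (b - a)"
    if "a \<le> b" "\<And>t. a \<le> t \<Longrightarrow> t \<le> b \<Longrightarrow> norm (f t) \<le> C" for a b
  proof (cases "a = b")
    case False
    with that have "0 \<le> C" by (meson norm_ge_zero order_trans order_refl)
    then show ?thesis
      using has_integral_bound[of C f "ivl_integral a b f" a b] ivl_integral_has_integral[OF assms(1)] that
      by auto
  qed simp
  show ?thesis
    using *[of a b] *[of b a] assms(2) ivl_integral_swap[of a b f] by (cases "a \<le> b") auto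
qed

lemma ivl_integral_FTC:
  assumes "\<And>t. (F has_vector_derivative f t) (at t)" "continuous_on UNIV f"
  shows "ivl_integral a b f = F b - F a"
  unfolding ivl_integral_def
  by (rule interval_integral_FTC_finite)
     (auto intro: continuous_on_subset[OF assms(2)] has_vector_derivative_at_within assms(1))

lemma ivl_integral_shift: "ivl_integral (a + c) (b + c) f = ivl_integral a b (\<lambda>t. f (t + c))"
proof -
  have *: "ivl_integral (a + c) (b + c) f = ivl_integral a b (\<lambda>t. f (t + c))" if "a \<le> b" for a b
  proof -
    have "ivl_integral (a + c) (b + c) f = (LBINT t. indicator {a+c..b+c} (c + 1 * t) *\<^sub>R f (c + 1 * t))"
      using that lborel_integral_real_affine[of 1 "\<lambda>t. indicator {a+c..b+c} t *\<^sub>R f t" c]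
      by (simp add: ivl_integral_Icc set_lebesgue_integral_def)
    also have "\<dots> = (LBINT t. indicator {a..b} t *\<^sub>R f (t + c))"
      by (intro Bochner_Integration.integral_cong) (auto simp: indicator_def add.commute)
    finally show ?thesis using that by (simp add: ivl_integral_Icc set_lebesgue_integral_def)
  qed
  show ?thesis
  proof (cases "a \<le> b")
    case False
    then have "ivl_integral (b + c) (a + c) f = ivl_integral b a (\<lambda>t. f (t + c))" by (intro *) auto
    then show ?thesis by (metis ivl_integral_swap)
  qed (rule *)
qed

lemma ivl_integral_reflect: "ivl_integral (- a) (- b) f = - ivl_integral a b (\<lambda>t. f (- t))"
proof -
  have *: "ivl_integral (- b) (- a) f = ivl_integral a b (\<lambda>t. f (- t))" if "a \<le> b" for a b
  proof -
    have "ivl_integral (- b) (- a) f = (LBINT t : {-b..-a}. f t)" using that by (simp add: ivl_integral_Icc)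
    also have "\<dots> = (LBINT t : {t. - t \<in> {-b..-a}}. f (- t))" by (rule set_integral_reflect)
    also have "{t. - t \<in> {-b..-a}} = {a..b}" by auto
    finally show ?thesis using that by (simp add: ivl_integral_Icc)
  qed
  show ?thesis
  proof (cases "a \<le> b")
    case True
    then show ?thesis using *[of a b] ivl_integral_swap[of "- a" "- b" f] by simp
  next
    case False
    then show ?thesis using *[of b a] ivl_integral_swap[of a b "\<lambda>t. f (- t)"] by simp
  qed
qed

lemma ivl_integral_continuous:
  assumes "loc_bounded f"
  shows "continuous_on UNIV (\<lambda>x. ivl_integral a x f)"
proof (rule continuous_at_imp_continuous_on, intro ballI)
  fix x
  obtain C where C: "\<forall>t\<in>{x-1..x+1}. norm (f t) \<le> C" using loc_boundedD[OF assms] by blast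
  then have "norm (f x) \<le> C" by simp
  then have "0 \<le> C" by (rule order_trans[OF norm_ge_zero])
  have "C-lipschitz_on {x-1..x+1} (\<lambda>y. ivl_integral a y f)"
  proof (rule lipschitz_onI[OF _ \<open>0 \<le> C\<close>])
    fix y z assume "y \<in> {x-1..x+1}" "z \<in> {x-1..x+1}"
    then have "norm (ivl_integral z y f) \<le> C * \<bar>y - z\<bar>"
      using C by (intro ivl_integral_norm_bound[OF assms]) (auto simp: min_def max_def split: if_splits)
    moreover have "ivl_integral a y f - ivl_integral a z f = ivl_integral z y f"
      using ivl_integral_combine[OF assms, of a z y] by (metis add_diff_cancel_left')
    ultimately show "dist (ivl_integral a y f) (ivl_integral a z f) \<le> C * dist y z"
      by (simp add: dist_norm dist_real_def)
  qed
  then show "isCont (\<lambda>y. ivl_integral a y f) x"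
    by (intro continuous_on_interior[OF lipschitz_on_continuous_on]) auto
qed

lemma const_if_quadratic_increments:
  fixes D :: "real \<Rightarrow> complex"
  assumes "\<And>x. \<exists>C. \<forall>y. \<bar>y - x\<bar> \<le> 1 \<longrightarrow> norm (D y - D x) \<le> C * (y - x)\<^sup>2"
  shows "D x = D 0"
proof -
  have "(D has_derivative (\<lambda>h. 0)) (at x)" for x
  proof -
    obtain C where C: "\<forall>y. \<bar>y - x\<bar> \<le> 1 \<longrightarrow> norm (D y - D x) \<le> C * (y - x)\<^sup>2" using assms by blast
    have "((\<lambda>y. norm (D y - D x - 0) / norm (y - x)) \<longlongrightarrow> 0) (at x)"
    proof (rule Lim_null_comparison)
      show "\<forall>\<^sub>F y in at x. norm (norm (D y - D x - 0) / norm (y - x)) \<le> \<bar>C\<bar> * \<bar>y - x\<bar>"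
        unfolding eventually_at
      proof (intro exI[of _ 1] conjI ballI impI)
        fix y assume "y \<noteq> x \<and> dist y x < 1"
        then have y: "\<bar>y - x\<bar> \<le> 1" "y \<noteq> x" by (auto simp: dist_real_def)
        have "norm (D y - D x) \<le> \<bar>C\<bar> * \<bar>y - x\<bar> * \<bar>y - x\<bar>"
          using C y by (auto simp: power2_eq_square abs_mult mult.assoc intro: order_trans[OF _ mult_right_mono])
        then show "norm (norm (D y - D x - 0) / norm (y - x)) \<le> \<bar>C\<bar> * \<bar>y - x\<bar>"
          using y by (simp add: divide_le_eq)
      qed simp
      show "((\<lambda>y. \<bar>C\<bar> * \<bar>y - x\<bar>) \<longlongrightarrow> 0) (at x)"
        by (rule tendsto_eq_intros) (auto intro!: tendsto_eq_intros)
    qed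
    then show ?thesis unfolding has_derivative_iff_norm by simp
  qed
  then obtain c where "\<forall>x\<in>UNIV. D x = c" using has_derivative_zero_constant[of UNIV D] by auto
  then show ?thesis by simp
qed

lemma continuous_if_indefinite_integral:
  assumes "loc_bounded f" "\<And>x. F x = F 0 + ivl_integral 0 x f"
  shows "continuous_on UNIV F"
proof (rule continuous_on_eq)
  show "continuous_on UNIV (\<lambda>x. F 0 + ivl_integral 0 x f)"
    by (intro continuous_intros ivl_integral_continuous assms(1))
qed (rule assms(2)[symmetric])

lemma ivl_integral_norm_bound_near:
  assumes f: "loc_bounded f" and C: "\<forall>t\<in>{x-1..x+1}. norm (f t) \<le> C" and y: "\<bar>y - x\<bar> \<le> 1"
    and ab: "a \<in> {min x y..max x y}" "b \<in> {min x y..max x y}"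
  shows "norm (ivl_integral a b f) \<le> C * \<bar>y - x\<bar>"
proof -
  have "norm (ivl_integral a b f) \<le> C * \<bar>b - a\<bar>"
    using C y ab by (intro ivl_integral_norm_bound[OF f]) (auto simp: min_def max_def split: if_splits)
  also have "\<dots> \<le> C * \<bar>y - x\<bar>"
  proof (rule mult_left_mono)
    show "\<bar>b - a\<bar> \<le> \<bar>y - x\<bar>" using ab by (auto simp: min_def max_def split: if_splits)
    have "norm (f x) \<le> C" using C by simp
    then show "0 \<le> C" by (rule order_trans[OF norm_ge_zero])
  qed
  finally show ?thesis .
qed

text \<open>The increment of \<open>F G - \<integral>(f G + F g)\<close> over \<open>[x, y]\<close> is \<open>O((y - x)\<^sup>2)\<close>, so this function
  is constant although \<open>f\<close> and \<open>g\<close> need not be continuous.\<close>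

lemma ivl_integral_product_rule:
  assumes f: "loc_bounded f" and g: "loc_bounded g"
    and F: "\<And>x. F x = F 0 + ivl_integral 0 x f" and G: "\<And>x. G x = G 0 + ivl_integral 0 x g"
  shows "F x * G x = F 0 * G 0 + ivl_integral 0 x (\<lambda>t. f t * G t + F t * g t)"
proof -
  have Fdiff: "F b - F a = ivl_integral a b f" for a b
    using F[of a] F[of b] ivl_integral_combine[OF f, of 0 a b] by (simp add: algebra_simps)
  have Gdiff: "G b - G a = ivl_integral a b g" for a b
    using G[of a] G[of b] ivl_integral_combine[OF g, of 0 a b] by (simp add: algebra_simps)
  have cF: "loc_bounded F" by (rule loc_bounded_continuous[OF continuous_if_indefinite_integral[OF f F]])
  have cG: "loc_bounded G" by (rule loc_bounded_continuous[OF continuous_if_indefinite_integral[OF g G]])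
  define h where "h t = f t * G t + F t * g t" for t
  have h: "loc_bounded h" unfolding h_def by (intro loc_bounded_intros f g cF cG)
  define D where "D x = F x * G x - ivl_integral 0 x h" for x
  have "D x = D 0"
  proof (rule const_if_quadratic_increments)
    fix x
    obtain Cf where Cf: "\<forall>t\<in>{x-1..x+1}. norm (f t) \<le> Cf" using loc_boundedD[OF f] by blast
    obtain Cg where Cg: "\<forall>t\<in>{x-1..x+1}. norm (g t) \<le> Cg" using loc_boundedD[OF g] by blast
    show "\<exists>C. \<forall>y. \<bar>y - x\<bar> \<le> 1 \<longrightarrow> norm (D y - D x) \<le> C * (y - x)\<^sup>2"
    proof (intro exI[of _ "2 * Cf * Cg"] allI impI)
      fix y assume y: "\<bar>y - x\<bar> \<le> 1"
      have "D y - D x = (F y - F x) * G x + F y * (G y - G x) - (ivl_integral 0 y h - ivl_integral 0 x h)"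
        unfolding D_def by (simp add: algebra_simps)
      also have "ivl_integral 0 y h - ivl_integral 0 x h = ivl_integral x y h"
        using ivl_integral_combine[OF h, of 0 x y] by (metis add_diff_cancel_left')
      also have "(F y - F x) * G x + F y * (G y - G x) - ivl_integral x y h
          = ivl_integral x y (\<lambda>t. f t * G x + F y * g t - h t)"
        unfolding Fdiff Gdiff
        by (simp add: ivl_integral_add ivl_integral_diff ivl_integral_cmult ivl_integral_multc
                      loc_bounded_cmult loc_bounded_mult loc_bounded_add loc_bounded_const f g h)
      also have "\<dots> = ivl_integral x y (\<lambda>t. f t * (G x - G t) + (F y - F t) * g t)"
        by (rule ivl_integral_cong) (simp add: h_def algebra_simps)
      also have "norm \<dots> \<le> (Cf * (Cg * \<bar>y - x\<bar>) + (Cf * \<bar>y - x\<bar>) * Cg) * \<bar>y - x\<bar>"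
      proof (rule ivl_integral_norm_bound)
        show "loc_bounded (\<lambda>t. f t * (G x - G t) + (F y - F t) * g t)"
          by (intro loc_bounded_intros f g cF cG)
        fix t assume t: "min x y \<le> t" "t \<le> max x y"
        have "norm (G x - G t) \<le> Cg * \<bar>y - x\<bar>" "norm (F y - F t) \<le> Cf * \<bar>y - x\<bar>"
          unfolding Fdiff Gdiff using t
          by (auto intro!: ivl_integral_norm_bound_near[OF g Cg y] ivl_integral_norm_bound_near[OF f Cf y])
        moreover have "norm (f t) \<le> Cf" "norm (g t) \<le> Cg"
          using Cf Cg t y by (auto simp: min_def max_def split: if_splits)
        ultimately show "norm (f t * (G x - G t) + (F y - F t) * g t)
            \<le> Cf * (Cg * \<bar>y - x\<bar>) + (Cf * \<bar>y - x\<bar>) * Cg"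
          by (intro norm_triangle_le add_mono) (auto simp: norm_mult intro: mult_mono' order_trans[OF norm_ge_zero])
      qed
      also have "\<dots> = 2 * Cf * Cg * (y - x)\<^sup>2" by (simp add: power2_eq_square algebra_simps abs_mult_self_eq)
      finally show "norm (D y - D x) \<le> 2 * Cf * Cg * (y - x)\<^sup>2" .
    qed
  qed
  then show ?thesis unfolding D_def h_def by (simp add: diff_eq_eq add.commute)
qed

definition tail_integral :: "real \<Rightarrow> (real \<Rightarrow> complex) \<Rightarrow> complex" where
  "tail_integral x f = (LINT t:{x..}|lborel. f t)"

lemma set_integrable_exp_tail:
  fixes c x :: real
  assumes "c > 0"
  shows "set_integrable lborel {x..} (\<lambda>t. exp (-c*t))"
    and "(LINT t:{x..}|lborel. exp (-c*t)) = exp (-c*x)/c"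
proof -
  have h: "((\<lambda>t. exp (-c*t)) has_integral exp (-c*x)/c) {x..}"
    by (rule has_integral_exp_minus_to_infinity[OF assms])
  have "(\<lambda>t. exp (-c*t)) absolutely_integrable_on {x..}"
    using h by (intro nonnegative_absolutely_integrable_1) (auto simp: has_integral_integrable)
  then show si: "set_integrable lborel {x..} (\<lambda>t. exp (-c*t))"
    unfolding set_integrable_def by (subst (asm) integrable_completion) auto
  show "(LINT t:{x..}|lborel. exp (-c*t)) = exp (-c*x)/c"
    using set_borel_integral_eq_integral(2)[OF si] integral_unique[OF h] by simp
qed

lemma tail_integral_exp_bound:
  fixes f :: "real \<Rightarrow> complex"
  assumes f[measurable]: "f \<in> borel_measurable borel" and c: "c > 0"
    and bound: "\<And>t. t \<ge> x \<Longrightarrow> norm (f t) \<le> C * exp (-c*t)"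
  shows "set_integrable lborel {x..} f" "norm (tail_integral x f) \<le> C * exp (-c*x) / c"
proof -
  have si: "set_integrable lborel {x..} (\<lambda>t. C * exp (-c*t))"
    using set_integrable_exp_tail(1)[OF c, of x] by simp
  show fi: "set_integrable lborel {x..} f"
  proof (rule set_integrable_bound[OF si])
    show "set_borel_measurable lborel {x..} f" unfolding set_borel_measurable_def by measurable
    show "AE t in lborel. t \<in> {x..} \<longrightarrow> norm (f t) \<le> norm (C * exp (- c * t))"
      using bound by (intro AE_I2) (auto intro: order_trans[OF _ abs_ge_self])
  qed
  have "norm (tail_integral x f) \<le> (LINT t:{x..}|lborel. norm (f t))"
    unfolding tail_integral_def by (rule set_integral_norm_bound[OF fi])
  also have "\<dots> \<le> (LINT t:{x..}|lborel. C * exp (-c*t))"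
    by (rule set_integral_mono[OF set_integrable_norm[OF fi] si]) (use bound in auto)
  also have "\<dots> = C * exp (-c*x) / c" using set_integrable_exp_tail(2)[OF c, of x] by simp
  finally show "norm (tail_integral x f) \<le> C * exp (-c*x) / c" .
qed

lemma tail_integral_split:
  assumes f: "loc_bounded f" and si: "set_integrable lborel {min x y..} f"
  shows "tail_integral x f = ivl_integral x y f + tail_integral y f"
proof -
  have [measurable]: "f \<in> borel_measurable borel" using f unfolding loc_bounded_def by auto
  have *: "tail_integral a f = ivl_integral a b f + tail_integral b f"
    if ab: "a \<le> b" "set_integrable lborel {a..} f" for a b
  proof -
    have "{a..} = {a..<b} \<union> {b..}" using ab(1) by auto
    then have "tail_integral a f = (LINT t:{a..<b} \<union> {b..}|lborel. f t)"
      unfolding tail_integral_def by simp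
    also have "\<dots> = (LINT t:{a..<b}|lborel. f t) + tail_integral b f"
      unfolding tail_integral_def
      by (rule set_integral_Un) (auto intro!: set_integrable_subset[OF ab(2)] simp: ab(1))
    also have "(LINT t:{a..<b}|lborel. f t) = (LINT t:{a<..<b}|lborel. f t)"
    proof (rule set_integral_cong_set)
      show "set_borel_measurable lborel {a..<b} f" "set_borel_measurable lborel {a<..<b} f"
        unfolding set_borel_measurable_def by measurable
      show "AE x in lborel. (x \<in> {a<..<b}) = (x \<in> {a..<b})"
        by (rule eventually_mono[OF AE_lborel_singleton[of a]]) auto
    qed
    also have "\<dots> = ivl_integral a b f"
      using ab by (simp add: ivl_integral_def interval_lebesgue_integral_le_eq)
    finally show ?thesis .
  qed
  show ?thesis
  proof (cases "x \<le> y")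
    case True then show ?thesis using *[of x y] si by auto
  next
    case False
    then have "tail_integral y f = ivl_integral y x f + tail_integral x f" using *[of y x] si by auto
    then show ?thesis using ivl_integral_swap[of x y f] by simp
  qed
qed

lemma tail_integral_add:
  "set_integrable lborel {x..} f \<Longrightarrow> set_integrable lborel {x..} g \<Longrightarrow>
    tail_integral x (\<lambda>t. f t + g t) = tail_integral x f + tail_integral x g"
  unfolding tail_integral_def by (rule set_integral_add)

lemma tail_integral_cmult: "tail_integral x (\<lambda>t. c * f t) = c * tail_integral x f"
  unfolding tail_integral_def by simp

lemma tail_integral_shift: "tail_integral (x + c) f = tail_integral x (\<lambda>t. f (t + c))"
proof -
  have "tail_integral (x + c) f = (LBINT t. indicator {x+c..} (c + 1 * t) *\<^sub>R f (c + 1 * t))"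
    using lborel_integral_real_affine[of 1 "\<lambda>t. indicator {x+c..} t *\<^sub>R f t" c]
    by (simp add: tail_integral_def set_lebesgue_integral_def)
  also have "\<dots> = (LBINT t. indicator {x..} t *\<^sub>R f (t + c))"
    by (intro Bochner_Integration.integral_cong) (auto simp: indicator_def add.commute)
  finally show ?thesis by (simp add: tail_integral_def set_lebesgue_integral_def)
qed

lemma ivl_integral_exp_bound:
  assumes f: "loc_bounded f" and bound: "\<And>t. norm (f t) \<le> B * exp \<bar>t\<bar>"
  shows "norm (ivl_integral 0 x f) \<le> B * exp \<bar>x\<bar>"
proof -
  have "0 \<le> B" using bound[of 0] by (auto intro: order_trans[OF norm_ge_zero])
  have nonneg: "norm (ivl_integral 0 x g) \<le> B * exp x"
    if "0 \<le> x" "loc_bounded g" "\<And>t. 0 \<le> t \<Longrightarrow> norm (g t) \<le> B * exp t" for g x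
  proof -
    have hi: "((\<lambda>t. B * exp t) has_integral (B * exp x - B * exp 0)) {0..x}"
      using that(1) by (intro fundamental_theorem_of_calculus)
        (auto intro!: derivative_eq_intros simp flip: has_real_derivative_iff_has_vector_derivative)
    have gi: "(g has_integral ivl_integral 0 x g) {0..x}" by (rule ivl_integral_has_integral[OF that(2,1)])
    have "norm (ivl_integral 0 x g) = norm (integral {0..x} g)" by (simp add: integral_unique[OF gi])
    also have "\<dots> \<le> integral {0..x} (\<lambda>t. B * exp t)"
      by (rule integral_norm_bound_integral) (use gi hi that(3) in \<open>auto simp: has_integral_integrable\<close>)
    also have "\<dots> = B * exp x - B" using integral_unique[OF hi] by simp
    finally show ?thesis using \<open>0 \<le> B\<close> by simp
  qed
  show ?thesis
  proof (cases "0 \<le> x")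
    case True
    have "norm (ivl_integral 0 x f) \<le> B * exp x" by (rule nonneg[OF True f]) (metis bound abs_of_nonneg)
    then show ?thesis using True by simp
  next
    case False
    have "norm (ivl_integral 0 (- x) (\<lambda>t. f (- t))) \<le> B * exp (- x)"
    proof (rule nonneg[OF _ loc_bounded_reflect[OF f]])
      show "0 \<le> - x" using False by simp
      show "norm (f (- t)) \<le> B * exp t" if "0 \<le> t" for t using bound[of "- t"] that by simp
    qed
    then show ?thesis using ivl_integral_reflect[of 0 "- x" f] False by simp
  qed
qed

section \<open>Solutions of \<open>-y'' + u y = \<lambda> y\<close>\<close>

definition bounded_potential :: "(real \<Rightarrow> real) \<Rightarrow> real \<Rightarrow> bool" where
  "bounded_potential u M \<longleftrightarrow> u \<in> borel_measurable borel \<and> (\<forall>t. \<bar>u t\<bar> \<le> M)"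

definition is_solution ::
    "(real \<Rightarrow> real) \<Rightarrow> complex \<Rightarrow> (real \<Rightarrow> complex) \<Rightarrow> (real \<Rightarrow> complex) \<Rightarrow> bool" where
  "is_solution u l f f' \<longleftrightarrow> continuous_on UNIV f \<and> continuous_on UNIV f' \<and>
     (\<forall>x. f x = f 0 + ivl_integral 0 x f') \<and>
     (\<forall>x. f' x = f' 0 + ivl_integral 0 x (\<lambda>t. (complex_of_real (u t) - l) * f t))"

lemma bounded_potential_nonneg: "bounded_potential u M \<Longrightarrow> 0 \<le> M"
  unfolding bounded_potential_def by (auto intro: order_trans[OF abs_ge_zero])

lemma bounded_potential_norm: "bounded_potential u M \<Longrightarrow> norm (complex_of_real (u t)) \<le> M"
  unfolding bounded_potential_def by auto

lemma loc_bounded_potential: "bounded_potential u M \<Longrightarrow> loc_bounded (\<lambda>t. complex_of_real (u t))"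
  unfolding bounded_potential_def by (intro loc_bounded_globally_bounded[of _ M]) auto

lemma bounded_potential_reflect:
  assumes "bounded_potential u M"
  shows "bounded_potential (\<lambda>t. u (- t)) M"
proof -
  have [measurable]: "u \<in> borel_measurable borel" using assms unfolding bounded_potential_def by blast
  have "(\<lambda>t. u (- t)) \<in> borel_measurable borel" by measurable
  then show ?thesis using assms unfolding bounded_potential_def by auto
qed

lemma is_solutionD:
  assumes "is_solution u l f f'"
  shows "loc_bounded f" "loc_bounded f'"
    "f x = f 0 + ivl_integral 0 x f'"
    "f' x = f' 0 + ivl_integral 0 x (\<lambda>t. (complex_of_real (u t) - l) * f t)"
  using assms unfolding is_solution_def by (blast intro: loc_bounded_continuous)+

lemma wronskian_const:
  assumes u: "bounded_potential u M" and f: "is_solution u l f f'" and g: "is_solution u l g g'"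
  shows "f x * g' x - f' x * g x = f 0 * g' 0 - f' 0 * g 0"
proof -
  define q where "q t = complex_of_real (u t) - l" for t
  have q: "loc_bounded q" unfolding q_def by (intro loc_bounded_intros loc_bounded_potential[OF u])
  note f = is_solutionD[OF f, folded q_def] and g = is_solutionD[OF g, folded q_def]
  have "f x * g' x = f 0 * g' 0 + ivl_integral 0 x (\<lambda>t. f' t * g' t + f t * (q t * g t))"
    by (rule ivl_integral_product_rule[OF f(2) loc_bounded_mult[OF q g(1)] f(3) g(4)])
  moreover have "f' x * g x = f' 0 * g 0 + ivl_integral 0 x (\<lambda>t. q t * f t * g t + f' t * g' t)"
    by (rule ivl_integral_product_rule[OF loc_bounded_mult[OF q f(1)] g(2) f(4) g(3)])
  moreover have "ivl_integral 0 x (\<lambda>t. f' t * g' t + f t * (q t * g t))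
      = ivl_integral 0 x (\<lambda>t. q t * f t * g t + f' t * g' t)"
    by (rule ivl_integral_cong) (simp add: algebra_simps)
  ultimately show ?thesis by simp
qed

lemma solution_in_fundamental_basis:
  assumes u: "bounded_potential u M"
    and y1: "is_solution u l y1 y1'" "y1 0 = 1" "y1' 0 = 0"
    and y2: "is_solution u l y2 y2'" "y2 0 = 0" "y2' 0 = 1"
    and F: "is_solution u l F F'"
  shows "F x = F 0 * y1 x + F' 0 * y2 x" "F' x = F 0 * y1' x + F' 0 * y2' x"
proof -
  have W: "y1 x * y2' x - y1' x * y2 x = 1" using wronskian_const[OF u y1(1) y2(1), of x] y1 y2 by simp
  have W2: "F x * y2' x - F' x * y2 x = F 0" using wronskian_const[OF u F y2(1), of x] y2 by simp
  have W1: "F x * y1' x - F' x * y1 x = - F' 0" using wronskian_const[OF u F y1(1), of x] y1 by simp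
  have "F x = F x * (y1 x * y2' x - y1' x * y2 x)" using W by simp
  also have "\<dots> = y1 x * (F x * y2' x - F' x * y2 x) - y2 x * (F x * y1' x - F' x * y1 x)"
    by (simp add: algebra_simps)
  finally show "F x = F 0 * y1 x + F' 0 * y2 x" using W1 W2 by (simp add: algebra_simps)
  have "F' x = F' x * (y1 x * y2' x - y1' x * y2 x)" using W by simp
  also have "\<dots> = y1' x * (F x * y2' x - F' x * y2 x) - y2' x * (F x * y1' x - F' x * y1 x)"
    by (simp add: algebra_simps)
  finally show "F' x = F 0 * y1' x + F' 0 * y2' x" using W1 W2 by (simp add: algebra_simps)
qed

lemma is_solution_reflect:
  assumes "is_solution (\<lambda>t. u (- t)) l f f'"
  shows "is_solution u l (\<lambda>x. f (- x)) (\<lambda>x. - f' (- x))"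
proof -
  have c: "continuous_on UNIV f" "continuous_on UNIV f'" using assms unfolding is_solution_def by blast+
  have e: "f x = f 0 + ivl_integral 0 x f'"
    "f' x = f' 0 + ivl_integral 0 x (\<lambda>t. (complex_of_real (u (- t)) - l) * f t)" for x
    using assms unfolding is_solution_def by blast+
  have "continuous_on UNIV (\<lambda>x. f (- x))"
    by (rule continuous_on_compose2[OF c(1)]) (auto intro: continuous_intros)
  moreover have "continuous_on UNIV (\<lambda>x. - f' (- x))"
    by (intro continuous_on_minus continuous_on_compose2[OF c(2)]) (auto intro: continuous_intros)
  moreover have "f (- x) = f (- 0) + ivl_integral 0 x (\<lambda>t. - f' (- t))" for x
    using e(1)[of "- x"] ivl_integral_reflect[of 0 x f'] by (simp add: ivl_integral_uminus)
  moreover have "- f' (- x) = - f' (- 0) + ivl_integral 0 x (\<lambda>t. (complex_of_real (u t) - l) * f (- t))" for x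
    using e(2)[of "- x"] ivl_integral_reflect[of 0 x "\<lambda>t. (complex_of_real (u (- t)) - l) * f t"] by simp
  ultimately show ?thesis unfolding is_solution_def by blast
qed

section \<open>The decaying solution as a fixed point\<close>

definition exp_bounded :: "real \<Rightarrow> (real \<Rightarrow> complex) \<Rightarrow> bool" where
  "exp_bounded B m \<longleftrightarrow> continuous_on UNIV m \<and> (\<forall>t. norm (m t) \<le> B * exp \<bar>t\<bar>)"

definition jost_tail :: "(real \<Rightarrow> real) \<Rightarrow> complex \<Rightarrow> (real \<Rightarrow> complex) \<Rightarrow> real \<Rightarrow> complex" where
  "jost_tail v k m x = exp (- 2 * \<i> * k * x) *
     tail_integral x (\<lambda>t. exp (2 * \<i> * k * t) * (complex_of_real (v t) * m t))"

text \<open>For \<open>f x = exp (\<i> k x) m x\<close> the equation \<open>m = 1 + jost_op v k m\<close> reads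
  \<open>f x = exp (\<i> k x) + (\<integral>\<^sub>0\<^sup>x exp (\<i> k (x - t)) v t f t dt + \<integral>\<^sub>x\<^sup>\<infinity> exp (\<i> k (t - x)) v t f t dt) / (2 \<i> k)\<close>,
  a variation of constants formula whose tail term selects the solution decaying as \<open>x \<rightarrow> \<infinity>\<close>.\<close>

definition jost_op :: "(real \<Rightarrow> real) \<Rightarrow> complex \<Rightarrow> (real \<Rightarrow> complex) \<Rightarrow> real \<Rightarrow> complex" where
  "jost_op v k m x = (ivl_integral 0 x (\<lambda>t. complex_of_real (v t) * m t) + jost_tail v k m x) / (2 * \<i> * k)"

lemma exp_boundedD:
  assumes "exp_bounded B m"
  shows "continuous_on UNIV m" "m \<in> borel_measurable borel" "norm (m t) \<le> B * exp \<bar>t\<bar>" "0 \<le> B"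
proof -
  show c: "continuous_on UNIV m" and b: "norm (m t) \<le> B * exp \<bar>t\<bar>" for t
    using assms unfolding exp_bounded_def by auto
  show "m \<in> borel_measurable borel" by (rule borel_measurable_continuous_onI[OF c])
  show "0 \<le> B" using b[of 0] by (auto intro: order_trans[OF norm_ge_zero])
qed

lemma loc_bounded_potential_mult:
  "bounded_potential v M \<Longrightarrow> continuous_on UNIV m \<Longrightarrow> loc_bounded (\<lambda>t. complex_of_real (v t) * m t)"
  by (intro loc_bounded_mult loc_bounded_potential loc_bounded_continuous)

lemma jost_tail_bound:
  assumes v: "bounded_potential v M" and k: "Im k > 1/2" and m: "m \<in> borel_measurable borel"
    and mb: "\<And>t. norm (m t) \<le> B * exp \<bar>t\<bar>"
  shows "set_integrable lborel {x..} (\<lambda>t. exp (2 * \<i> * k * t) * (complex_of_real (v t) * m t))"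
    and "norm (jost_tail v k m x) \<le> M * B * exp \<bar>x\<bar> / (2 * Im k - 1)"
proof -
  define c where "c = 2 * Im k - 1"
  have c: "c > 0" using k unfolding c_def by simp
  have M0: "0 \<le> M" by (rule bounded_potential_nonneg[OF v])
  have B0: "0 \<le> B" using mb[of 0] by (auto intro: order_trans[OF norm_ge_zero])
  have [measurable]: "v \<in> borel_measurable borel" "m \<in> borel_measurable borel"
    using v m unfolding bounded_potential_def by auto
  define h where "h t = exp (2 * \<i> * k * t) * (complex_of_real (v t) * m t)" for t
  have hm: "h \<in> borel_measurable borel" unfolding h_def by measurable
  have hb: "norm (h t) \<le> (M * B * exp (\<bar>x\<bar> - x)) * exp (- c * t)" if t: "t \<ge> x" for t
  proof -
    have "norm (h t) = exp (- 2 * Im k * t) * (norm (complex_of_real (v t)) * norm (m t))"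
      unfolding h_def norm_mult by (simp add: norm_exp_eq_Re)
    also have "\<dots> \<le> exp (- 2 * Im k * t) * (M * (B * exp \<bar>t\<bar>))"
      by (intro mult_left_mono mult_mono bounded_potential_norm[OF v] mb) (use M0 in auto)
    also have "\<dots> = M * B * exp (- 2 * Im k * t + \<bar>t\<bar>)" by (simp only: exp_add mult_ac)
    also have "\<dots> \<le> M * B * exp (\<bar>x\<bar> - x - c * t)"
      using t M0 B0 unfolding c_def by (intro mult_left_mono) (auto simp: algebra_simps)
    also have "\<dots> = (M * B * exp (\<bar>x\<bar> - x)) * exp (- c * t)" by (simp add: mult.assoc flip: exp_add)
    finally show ?thesis .
  qed
  from tail_integral_exp_bound[OF hm c hb]
  show "set_integrable lborel {x..} (\<lambda>t. exp (2 * \<i> * k * t) * (complex_of_real (v t) * m t))"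
    unfolding h_def by blast
  have "norm (jost_tail v k m x) \<le> exp (2 * Im k * x) * (M * B * exp (\<bar>x\<bar> - x) * exp (- c * x) / c)"
    unfolding jost_tail_def h_def[symmetric] norm_mult
    using tail_integral_exp_bound(2)[OF hm c hb] by (intro mult_mono) (auto simp: norm_exp_eq_Re)
  also have "\<dots> = M * B * exp \<bar>x\<bar> / c"
    unfolding c_def by (simp add: algebra_simps flip: exp_add)
  finally show "norm (jost_tail v k m x) \<le> M * B * exp \<bar>x\<bar> / (2 * Im k - 1)" unfolding c_def .
qed

lemma ivl_integral_potential_bound:
  assumes v: "bounded_potential v M" and m: "exp_bounded B m"
  shows "norm (ivl_integral 0 x (\<lambda>t. complex_of_real (v t) * m t)) \<le> M * B * exp \<bar>x\<bar>"
proof (rule ivl_integral_exp_bound)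
  show "loc_bounded (\<lambda>t. complex_of_real (v t) * m t)"
    by (rule loc_bounded_potential_mult[OF v exp_boundedD(1)[OF m]])
  show "norm (complex_of_real (v t) * m t) \<le> M * B * exp \<bar>t\<bar>" for t
    unfolding norm_mult mult.assoc using exp_boundedD[OF m] bounded_potential_norm[OF v]
      bounded_potential_nonneg[OF v]
    by (intro mult_mono) auto
qed

lemma jost_op_bound:
  assumes v: "bounded_potential v M" and k: "Im k \<ge> 1" and m: "exp_bounded B m"
  shows "norm (jost_op v k m x) \<le> M / norm k * B * exp \<bar>x\<bar>"
proof -
  have M0: "0 \<le> M" by (rule bounded_potential_nonneg[OF v])
  have B0: "0 \<le> B" by (rule exp_boundedD(4)[OF m])
  have k0: "norm k > 0" using k by auto
  have "norm (jost_tail v k m x) \<le> M * B * exp \<bar>x\<bar> / (2 * Im k - 1)"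
    using k exp_boundedD[OF m] by (intro jost_tail_bound(2)[OF v]) auto
  also have "\<dots> \<le> M * B * exp \<bar>x\<bar>"
    using k M0 B0 by (intro divide_left_mono[of 1, simplified]) auto
  finally have "norm (ivl_integral 0 x (\<lambda>t. complex_of_real (v t) * m t) + jost_tail v k m x)
      \<le> M * B * exp \<bar>x\<bar> + M * B * exp \<bar>x\<bar>"
    by (rule order_trans[OF norm_triangle_ineq add_mono[OF ivl_integral_potential_bound[OF v m]]])
  then have "norm (jost_op v k m x) \<le> (M * B * exp \<bar>x\<bar> + M * B * exp \<bar>x\<bar>) / (2 * norm k)"
    unfolding jost_op_def norm_divide
    by (simp only: norm_mult norm_numeral norm_ii mult_1_right) (rule divide_right_mono, simp_all)
  also have "\<dots> = M / norm k * B * exp \<bar>x\<bar>" using k0 by (simp add: field_simps)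
  finally show ?thesis .
qed

lemma jost_tail_eq:
  assumes v: "bounded_potential v M" and k: "Im k \<ge> 1" and m: "exp_bounded B m"
  shows "jost_tail v k m x = exp (- 2 * \<i> * k * x) *
    (tail_integral 0 (\<lambda>t. exp (2 * \<i> * k * t) * (complex_of_real (v t) * m t))
     - ivl_integral 0 x (\<lambda>t. exp (2 * \<i> * k * t) * (complex_of_real (v t) * m t)))"
proof -
  have "loc_bounded (\<lambda>t. exp (2 * \<i> * k * t) * (complex_of_real (v t) * m t))"
    using exp_boundedD(1)[OF m]
    by (intro loc_bounded_mult loc_bounded_potential_mult[OF v] loc_bounded_continuous continuous_intros)
  moreover have "set_integrable lborel {min x 0..} (\<lambda>t. exp (2 * \<i> * k * t) * (complex_of_real (v t) * m t))"
    using k exp_boundedD[OF m] by (intro jost_tail_bound(1)[OF v]) auto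
  ultimately show ?thesis
    unfolding jost_tail_def using ivl_integral_swap[of x 0] by (subst tail_integral_split[of _ x 0]) auto
qed

lemma jost_op_continuous:
  assumes v: "bounded_potential v M" and k: "Im k \<ge> 1" and m: "exp_bounded B m"
  shows "continuous_on UNIV (jost_op v k m)"
proof -
  have mc: "continuous_on UNIV m" by (rule exp_boundedD(1)[OF m])
  have "continuous_on UNIV (\<lambda>x. (ivl_integral 0 x (\<lambda>t. complex_of_real (v t) * m t)
      + exp (- 2 * \<i> * k * x) *
        (tail_integral 0 (\<lambda>t. exp (2 * \<i> * k * t) * (complex_of_real (v t) * m t))
         - ivl_integral 0 x (\<lambda>t. exp (2 * \<i> * k * t) * (complex_of_real (v t) * m t)))) / (2 * \<i> * k))"
    using mc k
    by (intro continuous_intros ivl_integral_continuous loc_bounded_mult loc_bounded_potential_mult[OF v]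
        loc_bounded_continuous) auto
  then show ?thesis unfolding jost_op_def jost_tail_eq[OF v k m] by simp
qed

lemma jost_op_diff:
  assumes v: "bounded_potential v M" and k: "Im k \<ge> 1" and f: "exp_bounded B1 f" and g: "exp_bounded B2 g"
  shows "jost_op v k (\<lambda>t. f t - c * g t) x = jost_op v k f x - c * jost_op v k g x"
proof -
  define vv where "vv t = complex_of_real (v t)" for t
  define e where "e t = exp (2 * \<i> * k * t)" for t :: real
  have lf: "loc_bounded (\<lambda>t. vv t * f t)" and lg: "loc_bounded (\<lambda>t. c * (vv t * g t))"
    unfolding vv_def
    by (rule loc_bounded_potential_mult[OF v exp_boundedD(1)[OF f]],
        rule loc_bounded_cmult[OF loc_bounded_potential_mult[OF v exp_boundedD(1)[OF g]]])
  have A: "ivl_integral 0 x (\<lambda>t. vv t * (f t - c * g t))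
      = ivl_integral 0 x (\<lambda>t. vv t * f t) - c * ivl_integral 0 x (\<lambda>t. vv t * g t)"
    using ivl_integral_diff[OF lf lg, of 0 x] by (simp add: algebra_simps ivl_integral_cmult)
  have i1: "set_integrable lborel {x..} (\<lambda>t. e t * (vv t * f t))"
    unfolding e_def vv_def using k exp_boundedD[OF f] by (intro jost_tail_bound(1)[OF v]) auto
  have i2: "set_integrable lborel {x..} (\<lambda>t. - c * (e t * (vv t * g t)))"
    unfolding e_def vv_def using k exp_boundedD[OF g]
    by (intro set_integrable_mult_right jost_tail_bound(1)[OF v]) auto
  have B: "tail_integral x (\<lambda>t. e t * (vv t * (f t - c * g t)))
      = tail_integral x (\<lambda>t. e t * (vv t * f t)) - c * tail_integral x (\<lambda>t. e t * (vv t * g t))"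
  proof -
    have "tail_integral x (\<lambda>t. e t * (vv t * (f t - c * g t)))
        = tail_integral x (\<lambda>t. e t * (vv t * f t) + - c * (e t * (vv t * g t)))"
      by (simp add: algebra_simps)
    also have "\<dots> = tail_integral x (\<lambda>t. e t * (vv t * f t)) + tail_integral x (\<lambda>t. - c * (e t * (vv t * g t)))"
      by (rule tail_integral_add[OF i1 i2])
    finally show ?thesis unfolding tail_integral_cmult by simp
  qed
  have "k \<noteq> 0" using k by auto
  then show ?thesis
    unfolding jost_op_def jost_tail_def vv_def[symmetric] e_def[symmetric] A B
    by (simp add: field_simps)
qed

lemma jost_op_fixpoint_eq_0:
  assumes v: "bounded_potential v M" and k: "Im k \<ge> 1" and q: "M / norm k < 1"
    and h: "exp_bounded B h" and fixed: "\<And>x. h x = jost_op v k h x"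
  shows "h x = 0"
proof -
  define q where "q = M / norm k"
  have q0: "0 \<le> q" unfolding q_def using bounded_potential_nonneg[OF v] by simp
  have bound: "exp_bounded (B * q ^ n) h" for n
  proof (induction n)
    case 0 then show ?case using h by simp
  next
    case (Suc n)
    have "norm (h t) \<le> B * q ^ Suc n * exp \<bar>t\<bar>" for t
      using fixed[of t] jost_op_bound[OF v k Suc.IH, of t] by (simp add: q_def algebra_simps)
    then show ?case using exp_boundedD(1)[OF h] unfolding exp_bounded_def by auto
  qed
  have "(\<lambda>n. B * q ^ n * exp \<bar>x\<bar>) \<longlonglongrightarrow> B * 0 * exp \<bar>x\<bar>"
    by (intro tendsto_intros LIMSEQ_power_zero) (use q q0 in \<open>auto simp: q_def\<close>)
  moreover have "\<exists>N. \<forall>n\<ge>N. norm (h x) \<le> B * q ^ n * exp \<bar>x\<bar>" using bound exp_boundedD(3) by blast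
  ultimately have "norm (h x) \<le> 0" using LIMSEQ_le_const by fastforce
  then show ?thesis by simp
qed

definition exp_weighted :: "(real \<Rightarrow>\<^sub>C complex) \<Rightarrow> real \<Rightarrow> complex" where
  "exp_weighted g t = complex_of_real (exp \<bar>t\<bar>) * apply_bcontfun g t"

lemma exp_bounded_exp_weighted: "exp_bounded (norm g) (exp_weighted g)"
  unfolding exp_bounded_def exp_weighted_def norm_mult
  using norm_bounded[of g] by (auto intro!: continuous_intros simp: mult.commute mult_left_mono)

lemma exp_bounded_exp_weighted_diff: "exp_bounded (dist g1 g2) (\<lambda>t. exp_weighted g1 t - exp_weighted g2 t)"
  unfolding exp_bounded_def
proof (intro conjI allI)
  show "continuous_on UNIV (\<lambda>t. exp_weighted g1 t - exp_weighted g2 t)"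
    unfolding exp_weighted_def by (intro continuous_intros) auto
  fix t
  have "norm (exp_weighted g1 t - exp_weighted g2 t) = exp \<bar>t\<bar> * dist (apply_bcontfun g1 t) (apply_bcontfun g2 t)"
    unfolding exp_weighted_def dist_norm by (simp add: norm_mult flip: right_diff_distrib)
  also have "\<dots> \<le> exp \<bar>t\<bar> * dist g1 g2" by (intro mult_left_mono dist_bounded) auto
  finally show "norm (exp_weighted g1 t - exp_weighted g2 t) \<le> dist g1 g2 * exp \<bar>t\<bar>"
    by (simp add: mult.commute)
qed

text \<open>The fixed point is found in the ball of radius 2 of the space of bounded continuous functions,
  after dividing out the weight \<open>exp \<bar>t\<bar>\<close>.\<close>

lemma jost_op_fixpoint_exists:
  assumes v: "bounded_potential v M" and k: "Im k \<ge> 1" and q: "M / norm k \<le> 1/2"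
  shows "\<exists>m. exp_bounded 2 m \<and> (\<forall>x. m x = 1 + jost_op v k m x)"
proof -
  note weighted = exp_bounded_exp_weighted
  define F where "F g x = (1 + jost_op v k (exp_weighted g) x) / complex_of_real (exp \<bar>x\<bar>)" for g x
  have F_bound: "norm (F g x) \<le> 1 + M / norm k * norm g" for g x
  proof -
    have "norm (1 + jost_op v k (exp_weighted g) x) \<le> 1 + M / norm k * norm g * exp \<bar>x\<bar>"
      using jost_op_bound[OF v k weighted] by (intro order_trans[OF norm_triangle_ineq add_mono]) auto
    also have "\<dots> \<le> (1 + M / norm k * norm g) * exp \<bar>x\<bar>"
      by (simp add: algebra_simps)
    finally show ?thesis unfolding F_def norm_divide by (simp add: divide_le_eq)
  qed
  have F: "F g \<in> bcontfun" for g
    using jost_op_continuous[OF v k weighted] F_bound unfolding F_def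
    by (intro bcontfun_normI continuous_intros) (auto simp: F_def)
  define \<Phi> where "\<Phi> g = Bcontfun (F g)" for g
  have \<Phi>: "apply_bcontfun (\<Phi> g) x = F g x" for g x
    unfolding \<Phi>_def using Bcontfun_inverse[OF F] by simp
  have "\<exists>!g\<in>cball 0 2. \<Phi> g = g"
  proof (rule Banach_fix)
    show "complete (cball (0 :: real \<Rightarrow>\<^sub>C complex) 2)" by (simp add: complete_eq_closed)
    show "\<Phi> ` cball 0 2 \<subseteq> cball 0 2"
    proof (clarsimp simp: mem_cball_0)
      fix g :: "real \<Rightarrow>\<^sub>C complex" assume "norm g \<le> 2"
      then have "1 + M / norm k * norm g \<le> 2"
        using q order_trans[OF mult_mono[OF q \<open>norm g \<le> 2\<close>]] by auto
      then show "norm (\<Phi> g) \<le> 2" by (intro norm_bound) (metis \<Phi> F_bound order_trans)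
    qed
    show "dist (\<Phi> g1) (\<Phi> g2) \<le> 1/2 * dist g1 g2" for g1 g2
    proof (rule dist_bound)
      fix x
      have "dist (apply_bcontfun (\<Phi> g1) x) (apply_bcontfun (\<Phi> g2) x)
          = norm (jost_op v k (\<lambda>t. exp_weighted g1 t - 1 * exp_weighted g2 t) x) / exp \<bar>x\<bar>"
        unfolding \<Phi> F_def dist_norm jost_op_diff[OF v k weighted weighted]
        by (simp add: diff_divide_distrib[symmetric] norm_divide)
      also have "\<dots> \<le> 1/2 * dist g1 g2"
      proof -
        have "norm (jost_op v k (\<lambda>t. exp_weighted g1 t - exp_weighted g2 t) x) \<le> M / norm k * dist g1 g2 * exp \<bar>x\<bar>"
          by (rule jost_op_bound[OF v k exp_bounded_exp_weighted_diff])
        also have "\<dots> \<le> 1/2 * dist g1 g2 * exp \<bar>x\<bar>" using q by (intro mult_right_mono) auto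
        finally show ?thesis by (simp add: pos_divide_le_eq)
      qed
      finally show "dist (apply_bcontfun (\<Phi> g1) x) (apply_bcontfun (\<Phi> g2) x) \<le> 1/2 * dist g1 g2" .
    qed
  qed auto
  then obtain g where g: "norm g \<le> 2" "\<Phi> g = g" by auto
  have "exp_bounded 2 (exp_weighted g)"
    using weighted[of g] g(1) unfolding exp_bounded_def by (auto intro: order_trans mult_right_mono)
  moreover have "exp_weighted g x = 1 + jost_op v k (exp_weighted g) x" for x
    using \<Phi>[of g x] g(2) unfolding F_def exp_weighted_def by (simp add: field_simps)
  ultimately show ?thesis by blast
qed

lemma exp_mult_has_vector_derivative:
  fixes c :: complex
  shows "((\<lambda>t::real. exp (c * t)) has_vector_derivative (c * exp (c * t))) (at t)"
proof -
  have "((\<lambda>z. exp (c * z)) has_field_derivative c * exp (c * t)) (at (complex_of_real t))"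
    by (auto intro!: derivative_eq_intros simp: mult.commute)
  from has_vector_derivative_real_field[OF this] show ?thesis by simp
qed

lemma exp_mult_eq_ivl_integral:
  fixes c :: complex
  shows "exp (c * x) = 1 + ivl_integral 0 x (\<lambda>t. c * exp (c * t))"
  using ivl_integral_FTC[OF exp_mult_has_vector_derivative, of c 0 x]
  by (simp add: continuous_intros)

lemma exp_mult_ivl_integral_product:
  fixes c :: complex
  assumes g: "loc_bounded g"
  shows "exp (c * x) * ivl_integral 0 x (\<lambda>t. exp (- c * t) * g t)
    = ivl_integral 0 x (\<lambda>t. c * exp (c * t) * ivl_integral 0 t (\<lambda>s. exp (- c * s) * g s) + g t)"
proof -
  have e: "loc_bounded (\<lambda>t. c * exp (c * t))" and eg: "loc_bounded (\<lambda>t. exp (- c * t) * g t)"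
    by (intro loc_bounded_mult loc_bounded_continuous continuous_intros g)+
  have "exp (c * x) = exp (c * complex_of_real 0) + ivl_integral 0 x (\<lambda>t. c * exp (c * t))" for x
    using exp_mult_eq_ivl_integral[of c x] by simp
  moreover have "ivl_integral 0 x (\<lambda>t. exp (- c * t) * g t)
      = ivl_integral 0 0 (\<lambda>t. exp (- c * t) * g t) + ivl_integral 0 x (\<lambda>t. exp (- c * t) * g t)" for x
    by simp
  ultimately have "exp (c * x) * ivl_integral 0 x (\<lambda>t. exp (- c * t) * g t)
      = exp (c * complex_of_real 0) * ivl_integral 0 0 (\<lambda>t. exp (- c * t) * g t) + ivl_integral 0 x
        (\<lambda>t. c * exp (c * t) * ivl_integral 0 t (\<lambda>s. exp (- c * s) * g s) + exp (c * t) * (exp (- c * t) * g t))"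
    by (rule ivl_integral_product_rule[OF e eg])
  then show ?thesis by (simp add: mult.assoc[symmetric] flip: exp_add)
qed

lemma variation_of_constants:
  fixes a b k :: complex
  assumes g: "loc_bounded g" and k: "k \<noteq> 0"
    and F: "\<And>x. F x = a * exp (\<i> * k * x) + b * exp (- \<i> * k * x)
      + (exp (\<i> * k * x) * ivl_integral 0 x (\<lambda>t. exp (- \<i> * k * t) * g t)
         - exp (- \<i> * k * x) * ivl_integral 0 x (\<lambda>t. exp (\<i> * k * t) * g t)) / (2 * \<i> * k)"
    and G: "\<And>x. G x = \<i> * k * (a * exp (\<i> * k * x) - b * exp (- \<i> * k * x))
      + (exp (\<i> * k * x) * ivl_integral 0 x (\<lambda>t. exp (- \<i> * k * t) * g t)
         + exp (- \<i> * k * x) * ivl_integral 0 x (\<lambda>t. exp (\<i> * k * t) * g t)) / 2"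
  shows "F x = F 0 + ivl_integral 0 x G"
    and "G x = G 0 + ivl_integral 0 x (\<lambda>t. g t - k\<^sup>2 * F t)"
proof -
  define ep where "ep t = exp (\<i> * k * t)" for t :: real
  define em where "em t = exp (- \<i> * k * t)" for t :: real
  define A where "A x = ivl_integral 0 x (\<lambda>t. em t * g t)" for x
  define B where "B x = ivl_integral 0 x (\<lambda>t. ep t * g t)" for x
  define h1 where "h1 t = \<i> * k * ep t * A t + g t" for t
  define h2 where "h2 t = - \<i> * k * em t * B t + g t" for t
  have ep0: "ep 0 = 1" "em 0 = 1" unfolding ep_def em_def by simp_all
  have lep: "loc_bounded ep" and lem: "loc_bounded em"
    unfolding ep_def em_def by (intro loc_bounded_continuous continuous_intros)+
  have l1: "loc_bounded (\<lambda>t. \<i> * k * ep t)" and l3: "loc_bounded (\<lambda>t. - \<i> * k * em t)"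
    by (rule loc_bounded_cmult[OF lep], rule loc_bounded_cmult[OF lem])
  have lA: "loc_bounded A" and lB: "loc_bounded B" unfolding A_def B_def
    by (intro loc_bounded_continuous ivl_integral_continuous loc_bounded_mult lep lem g)+
  have l2: "loc_bounded h1" and l4: "loc_bounded h2"
    unfolding h1_def h2_def by (intro loc_bounded_add loc_bounded_mult l1 l3 lA lB g)+
  have IBP1: "ep x * A x = ivl_integral 0 x h1" for x
    using exp_mult_ivl_integral_product[OF g, of "\<i> * k" x]
    unfolding ep_def em_def A_def h1_def by (simp add: mult.assoc)
  have IBP2: "em x * B x = ivl_integral 0 x h2" for x
    using exp_mult_ivl_integral_product[OF g, of "- \<i> * k" x]
    unfolding ep_def em_def B_def h2_def by (simp add: mult.assoc)
  have ep': "ivl_integral 0 x (\<lambda>t. \<i> * k * ep t) = ep x - 1"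
    and em': "ivl_integral 0 x (\<lambda>t. - \<i> * k * em t) = em x - 1"
    unfolding ep_def em_def using exp_mult_eq_ivl_integral[of "\<i> * k" x] exp_mult_eq_ivl_integral[of "- \<i> * k" x]
    by simp_all
  have lin: "ivl_integral 0 x (\<lambda>t. c1 * f1 t + c2 * f2 t + c3 * f3 t + c4 * f4 t)
      = c1 * ivl_integral 0 x f1 + c2 * ivl_integral 0 x f2 + c3 * ivl_integral 0 x f3 + c4 * ivl_integral 0 x f4"
    if "loc_bounded f1" "loc_bounded f2" "loc_bounded f3" "loc_bounded f4" for c1 c2 c3 c4 f1 f2 f3 f4
    using that by (simp add: ivl_integral_add ivl_integral_cmult loc_bounded_intros)
  note lin = lin[OF l1 l2 l3 l4]
  have F': "F x = a * ep x + b * em x + (ep x * A x - em x * B x) / (2 * \<i> * k)" for x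
    unfolding F ep_def em_def A_def B_def ..
  have G': "G x = \<i> * k * (a * ep x - b * em x) + (ep x * A x + em x * B x) / 2" for x
    unfolding G ep_def em_def A_def B_def ..
  have "F x - F 0 = a * (ep x - 1) + b * (em x - 1) + (ep x * A x - em x * B x) / (2 * \<i> * k)"
    unfolding F' by (simp add: ep0 A_def B_def algebra_simps)
  also have "\<dots> = ivl_integral 0 x (\<lambda>t. a * (\<i> * k * ep t) + (1 / (2 * \<i> * k)) * h1 t
      + b * (- \<i> * k * em t) + (- 1 / (2 * \<i> * k)) * h2 t)"
    unfolding lin IBP1[symmetric] IBP2[symmetric] ep' em' using k by (simp add: field_simps)
  also have "\<dots> = ivl_integral 0 x G"
    by (rule ivl_integral_cong) (use k in \<open>simp add: G' h1_def h2_def field_simps\<close>)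
  finally show "F x = F 0 + ivl_integral 0 x G" by (simp add: algebra_simps)
  have "G x - G 0 = \<i> * k * (a * (ep x - 1) - b * (em x - 1)) + (ep x * A x + em x * B x) / 2"
    unfolding G' by (simp add: ep0 A_def B_def algebra_simps)
  also have "\<dots> = ivl_integral 0 x (\<lambda>t. (\<i> * k * a) * (\<i> * k * ep t) + (1 / 2) * h1 t
      + (- \<i> * k * b) * (- \<i> * k * em t) + (1 / 2) * h2 t)"
    unfolding lin IBP1[symmetric] IBP2[symmetric] ep' em' using k by (simp add: field_simps)
  also have "\<dots> = ivl_integral 0 x (\<lambda>t. g t - k\<^sup>2 * F t)"
    by (rule ivl_integral_cong) (use k in \<open>simp add: F' h1_def h2_def field_simps power2_eq_square\<close>)
  finally show "G x = G 0 + ivl_integral 0 x (\<lambda>t. g t - k\<^sup>2 * F t)" by (simp add: algebra_simps)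
qed

definition jost_sol :: "complex \<Rightarrow> (real \<Rightarrow> complex) \<Rightarrow> real \<Rightarrow> complex" where
  "jost_sol k m x = exp (\<i> * k * x) * m x"

definition jost_sol_deriv :: "(real \<Rightarrow> real) \<Rightarrow> complex \<Rightarrow> (real \<Rightarrow> complex) \<Rightarrow> real \<Rightarrow> complex" where
  "jost_sol_deriv v k m x = exp (\<i> * k * x) * (\<i> * k * m x - jost_tail v k m x)"

lemma jost_sol_is_solution:
  assumes v: "bounded_potential v M" and k: "Im k \<ge> 1" and m: "exp_bounded B m"
    and fixed: "\<And>x. m x = 1 + jost_op v k m x"
  shows "is_solution v (k\<^sup>2) (jost_sol k m) (jost_sol_deriv v k m)"
proof -
  have k0: "k \<noteq> 0" using k by auto
  define F where "F = jost_sol k m"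
  define G where "G = jost_sol_deriv v k m"
  define ep where "ep t = exp (\<i> * k * t)" for t :: real
  define em where "em t = exp (- \<i> * k * t)" for t :: real
  define g where "g t = complex_of_real (v t) * F t" for t
  have epem: "ep t * em t = 1" for t unfolding ep_def em_def by (simp flip: exp_add)
  have cF: "continuous_on UNIV F"
    unfolding F_def jost_sol_def using exp_boundedD(1)[OF m] by (intro continuous_intros)
  have g: "loc_bounded g" unfolding g_def by (rule loc_bounded_potential_mult[OF v cF])
  have vm1: "complex_of_real (v t) * m t = em t * g t" for t
    using epem[of t] unfolding g_def F_def jost_sol_def ep_def[symmetric] by (simp add: algebra_simps)
  have vm2: "exp (2 * \<i> * k * t) * (complex_of_real (v t) * m t) = ep t * g t" for t
    unfolding g_def F_def jost_sol_def ep_def by (simp add: algebra_simps flip: exp_add)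
  have em2: "exp (- 2 * \<i> * k * x) = em x * em x" for x
    unfolding em_def by (simp add: algebra_simps flip: exp_add)
  define C where "C = tail_integral 0 (\<lambda>t. ep t * g t)"
  define A where "A x = ivl_integral 0 x (\<lambda>t. em t * g t)" for x
  define B where "B x = ivl_integral 0 x (\<lambda>t. ep t * g t)" for x
  have tail: "jost_tail v k m x = em x * em x * (C - B x)" for x
    unfolding jost_tail_eq[OF v k m] vm2 em2 C_def[symmetric] B_def ..
  have mx: "m x = 1 + (A x + em x * em x * (C - B x)) / (2 * \<i> * k)" for x
    using fixed[of x] unfolding jost_op_def tail vm1 A_def by simp
  have Fx: "F x = 1 * ep x + C / (2 * \<i> * k) * em x + (ep x * A x - em x * B x) / (2 * \<i> * k)" for x
    using epem[of x] unfolding F_def jost_sol_def ep_def[symmetric] mx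
    by (simp add: field_simps k0)
  have Gx: "G x = \<i> * k * (1 * ep x - C / (2 * \<i> * k) * em x) + (ep x * A x + em x * B x) / 2" for x
    using epem[of x] unfolding G_def jost_sol_deriv_def ep_def[symmetric] tail mx
    by (simp add: field_simps k0)
  note solution = variation_of_constants[OF g k0 Fx[unfolded ep_def em_def A_def B_def]
      Gx[unfolded ep_def em_def A_def B_def]]
  note F = solution(1) and G = solution(2)
  have G': "G x = G 0 + ivl_integral 0 x (\<lambda>t. (complex_of_real (v t) - k\<^sup>2) * F t)" for x
    unfolding G[of x] g_def by (simp add: algebra_simps)
  have "continuous_on UNIV G"
    by (rule continuous_if_indefinite_integral[OF _ G'])
      (intro loc_bounded_intros loc_bounded_potential[OF v] loc_bounded_continuous[OF cF])
  with cF F G' show ?thesis unfolding is_solution_def F_def G_def by blast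
qed

section \<open>Floquet solutions of periodic potentials\<close>

lemma jost_tail_shift:
  assumes per: "\<And>t. v (t + T) = v t"
  shows "jost_tail v k (\<lambda>t. m (t + T)) x = jost_tail v k m (x + T)"
proof -
  have "jost_tail v k m (x + T) = exp (- 2 * \<i> * k * (x + T)) *
      tail_integral x (\<lambda>t. exp (2 * \<i> * k * (t + T)) * (complex_of_real (v t) * m (t + T)))"
    unfolding jost_tail_def tail_integral_shift per by simp
  also have "\<dots> = exp (- 2 * \<i> * k * x) *
      tail_integral x (\<lambda>t. exp (2 * \<i> * k * t) * (complex_of_real (v t) * m (t + T)))"
  proof -
    have "exp (2 * \<i> * k * (t + T)) = exp (2 * \<i> * k * T) * exp (2 * \<i> * k * t)"
      and "exp (- 2 * \<i> * k * (x + T)) * exp (2 * \<i> * k * T) = exp (- 2 * \<i> * k * x)" for t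
      by (simp_all add: algebra_simps flip: exp_add)
    then show ?thesis by (simp add: mult.assoc tail_integral_cmult)
  qed
  finally show ?thesis unfolding jost_tail_def ..
qed

lemma jost_tail_cmult: "jost_tail v k (\<lambda>t. c * m t) x = c * jost_tail v k m x"
proof -
  have eq: "(\<lambda>t. exp (2 * \<i> * k * t) * (complex_of_real (v t) * (c * m t)))
      = (\<lambda>t. c * (exp (2 * \<i> * k * t) * (complex_of_real (v t) * m t)))"
    by (simp add: algebra_simps)
  show ?thesis unfolding jost_tail_def eq tail_integral_cmult by simp
qed

lemma ivl_integral_potential_shift:
  assumes per: "\<And>t. v (t + T) = v t" and l: "loc_bounded (\<lambda>t. complex_of_real (v t) * m t)"
  shows "ivl_integral 0 x (\<lambda>t. complex_of_real (v t) * m (t + T))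
    = ivl_integral 0 (x + T) (\<lambda>t. complex_of_real (v t) * m t) - ivl_integral 0 T (\<lambda>t. complex_of_real (v t) * m t)"
  using ivl_integral_shift[of 0 T x "\<lambda>t. complex_of_real (v t) * m t"] ivl_integral_combine[OF l, of 0 T "x + T"]
  by (simp add: per algebra_simps)

text \<open>Uniqueness of the fixed point turns periodicity of \<open>v\<close> into the Floquet property of \<open>m\<close>:
  both \<open>m (x + T)\<close> and \<open>\<gamma> m x\<close> solve \<open>h = \<gamma> + jost_op v k h\<close>.\<close>

lemma jost_fixpoint_floquet:
  assumes v: "bounded_potential v M" and per: "\<And>t. v (t + T) = v t" and k: "Im k \<ge> 1"
    and q: "M / norm k < 1" and m: "exp_bounded B m" and fixed: "\<And>x. m x = 1 + jost_op v k m x"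
  defines "\<gamma> \<equiv> 1 + ivl_integral 0 T (\<lambda>t. complex_of_real (v t) * m t) / (2 * \<i> * k)"
  shows "m (x + T) = \<gamma> * m x" "jost_tail v k m (x + T) = \<gamma> * jost_tail v k m x"
proof -
  have mc: "continuous_on UNIV m" and B0: "0 \<le> B" using exp_boundedD[OF m] by auto
  define m1 where "m1 x = m (x + T)" for x
  have m1: "exp_bounded (B * exp \<bar>T\<bar>) m1"
    unfolding exp_bounded_def m1_def
  proof (intro conjI allI)
    show "continuous_on UNIV (\<lambda>x. m (x + T))"
      by (rule continuous_on_compose2[OF mc]) (auto intro!: continuous_intros)
    fix t
    have "norm (m (t + T)) \<le> B * exp \<bar>t + T\<bar>" by (rule exp_boundedD(3)[OF m])
    also have "\<dots> \<le> B * exp (\<bar>T\<bar> + \<bar>t\<bar>)" using B0 by (intro mult_left_mono) auto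
    finally show "norm (m (t + T)) \<le> B * exp \<bar>T\<bar> * exp \<bar>t\<bar>" by (simp add: exp_add mult.assoc)
  qed
  have m1_fixed: "m1 x = \<gamma> + jost_op v k m1 x" for x
    using fixed[of "x + T"]
    unfolding m1_def \<gamma>_def jost_op_def jost_tail_shift[of v T, OF per]
      ivl_integral_potential_shift[of v T, OF per loc_bounded_potential_mult[OF v mc]]
    by (simp add: diff_divide_distrib add_divide_distrib)
  define h where "h x = m1 x - \<gamma> * m x" for x
  have "exp_bounded (B * exp \<bar>T\<bar> + norm \<gamma> * B) h"
    unfolding exp_bounded_def
  proof (intro conjI allI)
    show "continuous_on UNIV h"
      unfolding h_def using exp_boundedD(1)[OF m1] mc by (intro continuous_intros)
    fix t
    have "norm (h t) \<le> norm (m1 t) + norm \<gamma> * norm (m t)"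
      unfolding h_def by (metis norm_mult norm_triangle_ineq4)
    also have "\<dots> \<le> B * exp \<bar>T\<bar> * exp \<bar>t\<bar> + norm \<gamma> * (B * exp \<bar>t\<bar>)"
      by (intro add_mono mult_left_mono exp_boundedD(3)[OF m1] exp_boundedD(3)[OF m]) auto
    finally show "norm (h t) \<le> (B * exp \<bar>T\<bar> + norm \<gamma> * B) * exp \<bar>t\<bar>" by (simp add: algebra_simps)
  qed
  moreover have "h x = jost_op v k h x" for x
    unfolding h_def jost_op_diff[OF v k m1 m] using m1_fixed[of x] fixed[of x] by (simp add: algebra_simps)
  ultimately have "h x = 0" for x by (rule jost_op_fixpoint_eq_0[OF v k q])
  then have shift: "(\<lambda>t. m (t + T)) = (\<lambda>t. \<gamma> * m t)" unfolding h_def m1_def by auto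
  then show "m (x + T) = \<gamma> * m x" by meson
  show "jost_tail v k m (x + T) = \<gamma> * jost_tail v k m x"
    unfolding jost_tail_shift[of v T, OF per, symmetric] shift jost_tail_cmult ..
qed

lemma jost_sol_floquet:
  assumes v: "bounded_potential v M" and per: "\<And>t. v (t + T) = v t" and k: "Im k \<ge> 1"
    and q: "M / norm k < 1" and m: "exp_bounded B m" and fixed: "\<And>x. m x = 1 + jost_op v k m x"
  defines "\<mu> \<equiv> exp (\<i> * k * T) * (1 + ivl_integral 0 T (\<lambda>t. complex_of_real (v t) * m t) / (2 * \<i> * k))"
  shows "jost_sol k m (x + T) = \<mu> * jost_sol k m x" "jost_sol_deriv v k m (x + T) = \<mu> * jost_sol_deriv v k m x"
proof -
  note floquet = jost_fixpoint_floquet[OF v per k q m fixed]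
  have "exp (\<i> * k * (x + T)) = exp (\<i> * k * T) * exp (\<i> * k * x)"
    by (simp add: algebra_simps flip: exp_add)
  then show "jost_sol k m (x + T) = \<mu> * jost_sol k m x" "jost_sol_deriv v k m (x + T) = \<mu> * jost_sol_deriv v k m x"
    unfolding jost_sol_def jost_sol_deriv_def floquet \<mu>_def by (simp_all add: algebra_simps)
qed

lemma floquet_multiplier_lt_1:
  assumes v: "bounded_potential v M" and k: "Im k \<ge> 1" and q: "M / norm k \<le> 1/4" and m: "exp_bounded 2 m"
    and T: "T > 0" and kT: "exp (Im k * T) > 1 + exp T"
  shows "norm (exp (\<i> * k * T) * (1 + ivl_integral 0 T (\<lambda>t. complex_of_real (v t) * m t) / (2 * \<i> * k))) < 1"
proof -
  have k0: "norm k > 0" using k by auto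
  have "norm (ivl_integral 0 T (\<lambda>t. complex_of_real (v t) * m t) / (2 * \<i> * k))
      = norm (ivl_integral 0 T (\<lambda>t. complex_of_real (v t) * m t)) / (2 * norm k)"
    by (simp add: norm_divide norm_mult)
  also have "\<dots> \<le> M * 2 * exp T / (2 * norm k)"
    using ivl_integral_potential_bound[OF v m, of T] T k0 by (intro divide_right_mono) auto
  also have "\<dots> = M / norm k * exp T" by simp
  also have "\<dots> \<le> 1/4 * exp T" using q by (intro mult_right_mono) auto
  finally have "norm (1 + ivl_integral 0 T (\<lambda>t. complex_of_real (v t) * m t) / (2 * \<i> * k)) \<le> 1 + 1/4 * exp T"
    using norm_triangle_ineq[of 1 "ivl_integral 0 T (\<lambda>t. complex_of_real (v t) * m t) / (2 * \<i> * k)"]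
    by simp
  then have "norm (exp (\<i> * k * T) * (1 + ivl_integral 0 T (\<lambda>t. complex_of_real (v t) * m t) / (2 * \<i> * k)))
      \<le> exp (- (Im k * T)) * (1 + 1/4 * exp T)"
    by (simp add: norm_mult norm_exp_eq_Re mult_left_mono)
  also have "\<dots> < 1"
  proof -
    have "1 + 1/4 * exp T < exp (Im k * T)" using kT exp_gt_zero[of T] by linarith
    then show ?thesis by (simp add: exp_minus field_simps)
  qed
  finally show ?thesis .
qed

lemma norm_eq_1_if_root_real_trace:
  fixes t :: complex and d :: real
  assumes eq: "t\<^sup>2 - complex_of_real d * t + 1 = 0" and d: "\<bar>d\<bar> \<le> 2"
  shows "norm t = 1"
proof -
  define a where "a = Re t"
  define b where "b = Im t"
  have re: "a * a - b * b - d * a + 1 = 0"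
    using arg_cong[OF eq, of Re] unfolding a_def b_def by (simp add: power2_eq_square)
  have im: "2 * a * b - d * b = 0"
    using arg_cong[OF eq, of Im] unfolding a_def b_def by (simp add: power2_eq_square)
  have n2: "(norm t)\<^sup>2 = a * a + b * b" unfolding a_def b_def cmod_power2 by (simp add: power2_eq_square)
  have "a * a + b * b = 1"
  proof (cases "b = 0")
    case True
    then have e: "a * a + 1 = d * a" using re by simp
    have "d * a \<le> 2 * \<bar>a\<bar>"
    proof -
      have "d * a \<le> \<bar>d\<bar> * \<bar>a\<bar>" by (metis abs_ge_self abs_mult)
      also have "\<dots> \<le> 2 * \<bar>a\<bar>" using d by (intro mult_right_mono) auto
      finally show ?thesis .
    qed
    then have "(\<bar>a\<bar> - 1) * (\<bar>a\<bar> - 1) \<le> 0" using e by (simp add: algebra_simps abs_mult_self_eq)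
    then have "(\<bar>a\<bar> - 1) * (\<bar>a\<bar> - 1) = 0" using zero_le_square[of "\<bar>a\<bar> - 1"] by linarith
    then have "\<bar>a\<bar> = 1" by simp
    then have "a * a = 1" by (metis abs_mult_self_eq mult_1_right)
    then show ?thesis using True by simp
  next
    case False
    then have "2 * a = d" using im by (simp add: algebra_simps)
    then have "d * a = 2 * (a * a)" by (simp add: algebra_simps)
    then show ?thesis using re by linarith
  qed
  then have "(norm t)\<^sup>2 = 1" using n2 by simp
  then have "norm t = 1 \<or> norm t = -1" by (simp add: power2_eq_1_iff)
  then show ?thesis using norm_ge_zero[of t] by linarith
qed

lemma distinct_roots_mult_eq_1:
  fixes \<rho> \<mu> D :: complex
  assumes "\<rho>\<^sup>2 - D * \<rho> + 1 = 0" "\<mu>\<^sup>2 - D * \<mu> + 1 = 0" "\<rho> \<noteq> \<mu>"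
  shows "\<rho> * \<mu> = 1"
proof -
  have r1: "\<rho> * \<rho> = D * \<rho> - 1" "\<mu> * \<mu> = D * \<mu> - 1" using assms(1,2) by (simp_all add: algebra_simps power2_eq_square)
  have "(\<rho> - \<mu>) * (\<rho> + \<mu> - D) = \<rho> * \<rho> - \<mu> * \<mu> - D * \<rho> + D * \<mu>" by (simp add: algebra_simps)
  also have "\<dots> = 0" unfolding r1 by simp
  finally have "(\<rho> - \<mu>) * (\<rho> + \<mu> - D) = 0" .
  then have "\<rho> + \<mu> = D" using assms(3) by simp
  have "\<rho> * \<mu> = (\<rho> + \<mu>) * \<rho> - \<rho> * \<rho>" by (simp add: algebra_simps)
  also have "\<dots> = D * \<rho> - \<rho> * \<rho>" using \<open>\<rho> + \<mu> = D\<close> by simp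
  also have "\<dots> = 1" using r1(1) by simp
  finally show ?thesis .
qed

lemma eigenvalue_char_poly:
  fixes a b c d \<alpha> \<beta> \<mu> :: complex
  assumes "\<alpha> * a + \<beta> * b = \<mu> * \<alpha>" "\<alpha> * c + \<beta> * d = \<mu> * \<beta>" "\<alpha> \<noteq> 0" "a * d - c * b = 1"
  shows "\<mu>\<^sup>2 - (a + d) * \<mu> + 1 = 0"
proof -
  have "\<alpha> * ((a - \<mu>) * (d - \<mu>) - b * c) = (d - \<mu>) * (\<alpha> * a + \<beta> * b - \<mu> * \<alpha>) - b * (\<alpha> * c + \<beta> * d - \<mu> * \<beta>)"
    by (simp add: algebra_simps)
  also have "\<dots> = 0" using assms(1,2) by simp
  finally have "(a - \<mu>) * (d - \<mu>) - b * c = 0" using assms(3) by simp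
  then show ?thesis using assms(4) by (simp add: algebra_simps power2_eq_square)
qed

text \<open>In the application \<open>a, b, c, d\<close> are \<open>y1 T, y2 T, y1' T, y2' T\<close>, and \<open>(\<alpha>, \<beta>)\<close>, \<open>(\<alpha>', \<beta>')\<close> are the
  Cauchy data at 0 of two Floquet solutions with multipliers \<open>\<mu>\<close>, \<open>\<nu>\<close>.\<close>

lemma monodromy_eigenvalues:
  fixes a b c d \<alpha> \<beta> \<alpha>' \<beta>' \<mu> \<nu> \<rho> :: complex
  assumes W: "a * d - c * b = 1"
    and e1: "\<alpha> * a + \<beta> * b = \<mu> * \<alpha>" "\<alpha> * c + \<beta> * d = \<mu> * \<beta>" "\<alpha> \<noteq> 0"
    and e2: "\<alpha>' * a + \<beta>' * b = \<nu> * \<alpha>'" "\<alpha>' * c + \<beta>' * d = \<nu> * \<beta>'" "\<alpha>' \<noteq> 0"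
    and mn: "norm \<mu> < 1" "norm \<nu> > 1"
    and r: "\<rho>\<^sup>2 - (a + d) * \<rho> + 1 = 0" "norm \<rho> < 1"
  shows "\<rho> = \<mu>" "inverse \<rho> = \<nu>" "b \<noteq> 0" "(\<rho> - a) / b = \<beta> / \<alpha>" "(inverse \<rho> - a) / b = \<beta>' / \<alpha>'"
proof -
  have cm: "\<mu>\<^sup>2 - (a + d) * \<mu> + 1 = 0" by (rule eigenvalue_char_poly[OF e1 W])
  have cn: "\<nu>\<^sup>2 - (a + d) * \<nu> + 1 = 0" by (rule eigenvalue_char_poly[OF e2 W])
  show rm: "\<rho> = \<mu>"
  proof (rule ccontr)
    assume "\<rho> \<noteq> \<mu>"
    then have "\<rho> * \<mu> = 1" by (rule distinct_roots_mult_eq_1[OF r(1) cm])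
    then have "norm \<rho> * norm \<mu> = 1" by (metis norm_mult norm_one)
    moreover have "norm \<rho> * norm \<mu> < 1 * 1" using r(2) mn(1) by (intro mult_strict_mono') auto
    ultimately show False by simp
  qed
  have "\<nu> \<noteq> \<mu>" using mn by auto
  then have "\<nu> * \<mu> = 1" by (rule distinct_roots_mult_eq_1[OF cn cm])
  then show ri: "inverse \<rho> = \<nu>" using rm by (simp add: inverse_unique mult.commute)
  show b0: "b \<noteq> 0"
  proof
    assume "b = 0"
    then have "\<mu> = a" "\<nu> = a" using e1(1,3) e2(1,3) by (simp_all add: mult.commute)
    then show False using \<open>\<nu> \<noteq> \<mu>\<close> by simp
  qed
  show "(\<rho> - a) / b = \<beta> / \<alpha>" using e1(1) e1(3) b0 rm by (simp add: field_simps)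
  show "(inverse \<rho> - a) / b = \<beta>' / \<alpha>'" using e2(1) e2(3) b0 ri by (simp add: field_simps)
qed

lemma trace_outside_band:
  fixes a b c d \<alpha> \<beta> \<mu> :: complex
  assumes W: "a * d - c * b = 1" and e: "\<alpha> * a + \<beta> * b = \<mu> * \<alpha>" "\<alpha> * c + \<beta> * d = \<mu> * \<beta>" "\<alpha> \<noteq> 0"
    and \<mu>: "norm \<mu> < 1"
  shows "a + d \<notin> complex_of_real ` {-2..2}"
proof
  assume "a + d \<in> complex_of_real ` {-2..2}"
  then obtain r where "a + d = complex_of_real r" "\<bar>r\<bar> \<le> 2" by auto
  with eigenvalue_char_poly[OF e W] have "norm \<mu> = 1" by (intro norm_eq_1_if_root_real_trace) simp_all
  with \<mu> show False by simp
qed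

section \<open>Asymptotics of the decaying solution\<close>

lemma jost_fixpoint_estimates:
  assumes v: "bounded_potential v M" and k: "Im k \<ge> 1" and c: "c > 0" "Im k \<ge> c * norm k"
    and q: "M / norm k \<le> 1/4" and m: "exp_bounded 2 m" and fixed: "\<And>x. m x = 1 + jost_op v k m x"
  shows "norm (m y - 1) \<le> 2 * M / norm k * exp \<bar>y\<bar>"
    and "norm (m y - 1 - ivl_integral 0 y (\<lambda>t. complex_of_real (v t)) / (2 * \<i> * k))
           \<le> (M * M + M / c) / (norm k)\<^sup>2 * exp \<bar>y\<bar>"
    and "norm (jost_tail v k m y) \<le> 2 * M * exp \<bar>y\<bar>"
    and "norm (m 0) \<ge> 1/2"
proof -
  have mc: "continuous_on UNIV m" using exp_boundedD[OF m] by blast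
  have k0: "norm k > 0" using k by auto
  have M0: "0 \<le> M" by (rule bounded_potential_nonneg[OF v])
  have m1: "norm (m t - 1) \<le> 2 * M / norm k * exp \<bar>t\<bar>" for t
    using fixed[of t] jost_op_bound[OF v k m, of t] by (simp add: mult_ac)
  then show "norm (m y - 1) \<le> 2 * M / norm k * exp \<bar>y\<bar>" .
  have "2 * M / norm k \<le> 1/2" using q by (simp add: mult.commute)
  then have "norm (m 0 - 1) \<le> 1/2" using m1[of 0] by simp
  then show "norm (m 0) \<ge> 1/2" using norm_triangle_ineq2[of 1 "m 0"] by (simp add: norm_minus_commute)
  have tail: "norm (jost_tail v k m y) \<le> M * 2 * exp \<bar>y\<bar> / (2 * Im k - 1)"
    using k exp_boundedD[OF m] by (intro jost_tail_bound(2)[OF v]) auto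
  also have "\<dots> \<le> M * 2 * exp \<bar>y\<bar> / Im k"
    using k M0 by (intro divide_left_mono) auto
  also have "\<dots> \<le> M * 2 * exp \<bar>y\<bar> / 1"
    using k M0 by (intro divide_left_mono) auto
  finally show "norm (jost_tail v k m y) \<le> 2 * M * exp \<bar>y\<bar>" by simp
  have "exp_bounded (2 * M / norm k) (\<lambda>t. m t - 1)"
    unfolding exp_bounded_def using m1 mc by (auto intro: continuous_intros)
  then have b1: "norm (ivl_integral 0 y (\<lambda>t. complex_of_real (v t) * (m t - 1))) \<le> M * (2 * M / norm k) * exp \<bar>y\<bar>"
    by (rule ivl_integral_potential_bound[OF v])
  have "c * norm k \<le> 2 * Im k - 1" using c(2) k by linarith
  then have "M * 2 * exp \<bar>y\<bar> / (2 * Im k - 1) \<le> M * 2 * exp \<bar>y\<bar> / (c * norm k)"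
    using c k k0 M0 by (intro divide_left_mono) auto
  with tail have b2: "norm (jost_tail v k m y) \<le> M * 2 * exp \<bar>y\<bar> / (c * norm k)" by linarith
  have "m y - 1 - ivl_integral 0 y (\<lambda>t. complex_of_real (v t)) / (2 * \<i> * k)
      = (ivl_integral 0 y (\<lambda>t. complex_of_real (v t) * (m t - 1)) + jost_tail v k m y) / (2 * \<i> * k)"
  proof -
    have "ivl_integral 0 y (\<lambda>t. complex_of_real (v t) * (m t - 1))
        = ivl_integral 0 y (\<lambda>t. complex_of_real (v t) * m t) - ivl_integral 0 y (\<lambda>t. complex_of_real (v t))"
      using ivl_integral_diff[OF loc_bounded_potential_mult[OF v mc] loc_bounded_potential[OF v], of 0 y]
      by (simp add: algebra_simps)
    then show ?thesis using fixed[of y] unfolding jost_op_def by (simp add: diff_divide_distrib add_divide_distrib)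
  qed
  also have "norm \<dots> \<le> (M * (2 * M / norm k) * exp \<bar>y\<bar> + M * 2 * exp \<bar>y\<bar> / (c * norm k)) / (2 * norm k)"
    unfolding norm_divide using b1 b2
    by (simp add: norm_mult divide_right_mono order_trans[OF norm_triangle_ineq add_mono])
  also have "\<dots> = (M * M + M / c) / (norm k)\<^sup>2 * exp \<bar>y\<bar>"
    using k0 c by (simp add: field_simps power2_eq_square)
  finally show "norm (m y - 1 - ivl_integral 0 y (\<lambda>t. complex_of_real (v t)) / (2 * \<i> * k))
      \<le> (M * M + M / c) / (norm k)\<^sup>2 * exp \<bar>y\<bar>" .
qed

lemma jost_sol_asymptotics:
  assumes v: "bounded_potential v M" and k: "Im k \<ge> 1" and c: "c > 0" "Im k \<ge> c * norm k"
    and q: "M / norm k \<le> 1/4" and m: "exp_bounded 2 m" and fixed: "\<And>x. m x = 1 + jost_op v k m x"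
  shows "norm (jost_sol k m y / m 0
      - exp (\<i> * k * y) * (1 + ivl_integral 0 y (\<lambda>t. complex_of_real (v t)) / (2 * \<i> * k)))
     \<le> 2 * (M * M + M / c) * (exp \<bar>y\<bar> + 1 + M * \<bar>y\<bar>) * norm (exp (\<i> * k * y) / k\<^sup>2)"
proof -
  note est = jost_fixpoint_estimates[OF v k c q m fixed]
  define A where "A = M * M + M / c"
  define \<delta> where "\<delta> = A / (norm k)\<^sup>2"
  have k0: "norm k > 0" and k1: "norm k \<ge> 1" using k abs_Im_le_cmod[of k] by auto
  have M0: "0 \<le> M" by (rule bounded_potential_nonneg[OF v])
  have \<delta>0: "0 \<le> \<delta>" unfolding \<delta>_def A_def using M0 c by simp
  define w where "w = ivl_integral 0 y (\<lambda>t. complex_of_real (v t)) / (2 * \<i> * k)"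
  have m0: "norm (m 0) \<ge> 1/2" by (rule est(4))
  then have "m 0 \<noteq> 0" by auto
  have "norm (ivl_integral 0 y (\<lambda>t. complex_of_real (v t))) \<le> M * \<bar>y - 0\<bar>"
    by (rule ivl_integral_norm_bound[OF loc_bounded_potential[OF v]]) (rule bounded_potential_norm[OF v])
  then have "norm w \<le> M * \<bar>y\<bar> / (2 * norm k)"
    unfolding w_def by (simp add: norm_divide norm_mult divide_right_mono)
  also have "\<dots> \<le> M * \<bar>y\<bar> / 1" using k1 M0 by (intro divide_left_mono) auto
  finally have "norm (1 + w) \<le> 1 + M * \<bar>y\<bar>" using norm_triangle_ineq[of 1 w] by simp
  then have "norm ((m 0 - 1) * (1 + w)) \<le> \<delta> * (1 + M * \<bar>y\<bar>)"
    using est(2)[of 0] \<delta>0 unfolding norm_mult \<delta>_def A_def by (intro mult_mono) auto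
  then have "norm ((m y - 1 - w) - (m 0 - 1) * (1 + w)) \<le> \<delta> * exp \<bar>y\<bar> + \<delta> * (1 + M * \<bar>y\<bar>)"
    using est(2)[of y] unfolding w_def[symmetric] \<delta>_def A_def
    by (intro order_trans[OF norm_triangle_ineq4 add_mono])
  then have "norm (((m y - 1 - w) - (m 0 - 1) * (1 + w)) / m 0) \<le> (\<delta> * exp \<bar>y\<bar> + \<delta> * (1 + M * \<bar>y\<bar>)) / (1/2)"
    unfolding norm_divide using m0 \<delta>0 M0 by (intro frac_le) auto
  also have "\<dots> = 2 * A * (exp \<bar>y\<bar> + 1 + M * \<bar>y\<bar>) / (norm k)\<^sup>2"
    unfolding \<delta>_def by (simp add: algebra_simps add_divide_distrib)
  finally have bound: "norm (((m y - 1 - w) - (m 0 - 1) * (1 + w)) / m 0)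
      \<le> 2 * A * (exp \<bar>y\<bar> + 1 + M * \<bar>y\<bar>) / (norm k)\<^sup>2" .
  have eq: "jost_sol k m y / m 0 - exp (\<i> * k * y) * (1 + w)
      = exp (\<i> * k * y) * (((m y - 1 - w) - (m 0 - 1) * (1 + w)) / m 0)"
    unfolding jost_sol_def using \<open>m 0 \<noteq> 0\<close> by (simp add: field_simps)
  have "norm (exp (\<i> * k * y)) * (2 * A * (exp \<bar>y\<bar> + 1 + M * \<bar>y\<bar>) / (norm k)\<^sup>2)
      = 2 * A * (exp \<bar>y\<bar> + 1 + M * \<bar>y\<bar>) * norm (exp (\<i> * k * y) / k\<^sup>2)"
    by (simp add: norm_divide norm_power)
  then show ?thesis
    unfolding w_def[symmetric] A_def[symmetric] eq norm_mult
    by (metis bound mult_left_mono norm_ge_zero)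
qed

lemma jost_sol_deriv_asymptotics:
  assumes v: "bounded_potential v M" and k: "Im k \<ge> 1" and c: "c > 0" "Im k \<ge> c * norm k"
    and q: "M / norm k \<le> 1/4" and m: "exp_bounded 2 m" and fixed: "\<And>x. m x = 1 + jost_op v k m x"
  shows "norm (jost_sol_deriv v k m y / m 0 - exp (\<i> * k * y) * (\<i> * k))
     \<le> 8 * M * (exp \<bar>y\<bar> + 1) * norm (exp (\<i> * k * y))"
proof -
  note est = jost_fixpoint_estimates[OF v k c q m fixed]
  have k0: "norm k > 0" using k by auto
  have M0: "0 \<le> M" by (rule bounded_potential_nonneg[OF v])
  have m0: "norm (m 0) \<ge> 1/2" by (rule est(4))
  then have "m 0 \<noteq> 0" by auto
  have "norm (m y - m 0) \<le> 2 * M / norm k * exp \<bar>y\<bar> + 2 * M / norm k * exp \<bar>0\<bar>"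
    using norm_triangle_ineq4[of "m y - 1" "m 0 - 1"] est(1)[of y] est(1)[of 0] by simp
  then have "norm (\<i> * k * (m y - m 0)) \<le> norm k * (2 * M / norm k * exp \<bar>y\<bar> + 2 * M / norm k * exp \<bar>0\<bar>)"
    by (simp add: norm_mult mult_left_mono)
  also have "\<dots> = 2 * M * (exp \<bar>y\<bar> + 1)" using k0 by (simp add: field_simps)
  finally have "norm (\<i> * k * (m y - m 0)) \<le> 2 * M * (exp \<bar>y\<bar> + 1)" .
  then have "norm (\<i> * k * (m y - m 0) - jost_tail v k m y) \<le> 2 * M * (exp \<bar>y\<bar> + 1) + 2 * M * exp \<bar>y\<bar>"
    using est(3)[of y] by (intro order_trans[OF norm_triangle_ineq4 add_mono])
  also have "\<dots> \<le> 4 * M * (exp \<bar>y\<bar> + 1)" using M0 by (simp add: algebra_simps)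
  finally have "norm ((\<i> * k * (m y - m 0) - jost_tail v k m y) / m 0) \<le> (4 * M * (exp \<bar>y\<bar> + 1)) / (1/2)"
    unfolding norm_divide using m0 M0 by (intro frac_le) auto
  then have bound: "norm ((\<i> * k * (m y - m 0) - jost_tail v k m y) / m 0) \<le> 8 * M * (exp \<bar>y\<bar> + 1)"
    by simp
  have eq: "jost_sol_deriv v k m y / m 0 - exp (\<i> * k * y) * (\<i> * k)
      = exp (\<i> * k * y) * ((\<i> * k * (m y - m 0) - jost_tail v k m y) / m 0)"
    unfolding jost_sol_deriv_def using \<open>m 0 \<noteq> 0\<close> by (simp add: field_simps)
  show ?thesis
    unfolding eq norm_mult by (simp only: mult.commute[of "norm (exp (\<i> * k * y))"])
      (rule mult_right_mono[OF bound norm_ge_zero])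
qed

lemma decaying_floquet_solution:
  assumes v: "bounded_potential v M" and per: "\<And>t. v (t + T) = v t" and T: "T > 0"
    and k: "Im k \<ge> 1" and q: "M / norm k \<le> 1/4" and kT: "exp (Im k * T) > 1 + exp T"
  shows "\<exists>m \<mu>. exp_bounded 2 m \<and> (\<forall>x. m x = 1 + jost_op v k m x) \<and> m 0 \<noteq> 0 \<and> norm \<mu> < 1 \<and>
    (\<forall>x. jost_sol k m (x + T) = \<mu> * jost_sol k m x) \<and>
    (\<forall>x. jost_sol_deriv v k m (x + T) = \<mu> * jost_sol_deriv v k m x)"
proof -
  obtain m where m: "exp_bounded 2 m" and fixed: "\<And>x. m x = 1 + jost_op v k m x"
    using jost_op_fixpoint_exists[OF v k] q by auto
  have "norm (m 0 - 1) \<le> M / norm k * 2" using fixed[of 0] jost_op_bound[OF v k m, of 0] by simp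
  also have "\<dots> \<le> 1/2" using q by (simp add: mult.commute)
  finally have "m 0 \<noteq> 0" by auto
  define \<mu> where "\<mu> = exp (\<i> * k * T) * (1 + ivl_integral 0 T (\<lambda>t. complex_of_real (v t) * m t) / (2 * \<i> * k))"
  have "norm \<mu> < 1" unfolding \<mu>_def by (rule floquet_multiplier_lt_1[OF v k q m T kT])
  moreover have "M / norm k < 1" using q by linarith
  note floquet = jost_sol_floquet[OF v per k this m fixed, folded \<mu>_def]
  ultimately show ?thesis using m fixed \<open>m 0 \<noteq> 0\<close> floquet by blast
qed

lemma bloch_floquet_representation:
  fixes y1 y1' y2 y2' :: "real \<Rightarrow> complex" and \<rho> :: complex
  assumes u: "bounded_potential u M" and per: "\<And>t. u (t + T) = u t" and T: "T > 0"
    and y1: "is_solution u l y1 y1'" "y1 0 = 1" "y1' 0 = 0"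
    and y2: "is_solution u l y2 y2'" "y2 0 = 0" "y2' 0 = 1"
    and l: "l = k\<^sup>2" and k: "Im k \<ge> 1" and q: "M / norm k \<le> 1/4" and kT: "exp (Im k * T) > 1 + exp T"
    and \<rho>: "y1 T + y2' T \<notin> complex_of_real ` {-2..2} \<Longrightarrow> \<rho>\<^sup>2 - (y1 T + y2' T) * \<rho> + 1 = 0 \<and> norm \<rho> < 1"
  shows "\<exists>m mr. exp_bounded 2 m \<and> (\<forall>x. m x = 1 + jost_op u k m x) \<and>
    exp_bounded 2 mr \<and> (\<forall>x. mr x = 1 + jost_op (\<lambda>t. u (- t)) k mr x) \<and>
    (\<forall>x. y1 x + (\<rho> - y1 T) / y2 T * y2 x = jost_sol k m x / m 0) \<and>
    (\<forall>x. y1' x + (\<rho> - y1 T) / y2 T * y2' x = jost_sol_deriv u k m x / m 0) \<and>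
    (\<forall>x. y1 x + (inverse \<rho> - y1 T) / y2 T * y2 x = jost_sol k mr (- x) / mr 0) \<and>
    (\<forall>x. y1' x + (inverse \<rho> - y1 T) / y2 T * y2' x = - jost_sol_deriv (\<lambda>t. u (- t)) k mr (- x) / mr 0)"
proof -
  define ur where "ur = (\<lambda>t. u (- t))"
  have ur: "bounded_potential ur M" unfolding ur_def by (rule bounded_potential_reflect[OF u])
  have per_r: "ur (t + T) = ur t" for t unfolding ur_def using per[of "- t - T"] by simp
  obtain m \<mu> where m: "exp_bounded 2 m" and fixed: "\<forall>x. m x = 1 + jost_op u k m x" and m0: "m 0 \<noteq> 0"
    and \<mu>: "norm \<mu> < 1" "\<forall>x. jost_sol k m (x + T) = \<mu> * jost_sol k m x"
      "\<forall>x. jost_sol_deriv u k m (x + T) = \<mu> * jost_sol_deriv u k m x"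
    using decaying_floquet_solution[OF u per T k q kT] by blast
  obtain mr \<mu>r where mr: "exp_bounded 2 mr" and fixed_r: "\<forall>x. mr x = 1 + jost_op ur k mr x" and mr0: "mr 0 \<noteq> 0"
    and \<mu>r: "norm \<mu>r < 1" "\<forall>x. jost_sol k mr (x + T) = \<mu>r * jost_sol k mr x"
      "\<forall>x. jost_sol_deriv ur k mr (x + T) = \<mu>r * jost_sol_deriv ur k mr x"
    using decaying_floquet_solution[OF ur per_r T k q kT] by blast
  define F where "F = jost_sol k m"
  define G where "G = jost_sol_deriv u k m"
  define Fr where "Fr x = jost_sol k mr (- x)" for x
  define Gr where "Gr x = - jost_sol_deriv ur k mr (- x)" for x
  have F0: "F 0 = m 0" and Fr0: "Fr 0 = mr 0" unfolding F_def Fr_def jost_sol_def by simp_all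
  have sol: "is_solution u l F G"
    unfolding F_def G_def l by (rule jost_sol_is_solution[OF u k m fixed[rule_format]])
  have sol_r: "is_solution u l Fr Gr"
    unfolding Fr_def Gr_def l using jost_sol_is_solution[OF ur k mr fixed_r[rule_format]]
    by (intro is_solution_reflect) (simp add: ur_def)
  note rep = solution_in_fundamental_basis[OF u y1 y2 sol]
    and rep_r = solution_in_fundamental_basis[OF u y1 y2 sol_r]
  have "jost_sol k mr 0 = \<mu>r * jost_sol k mr (- T)" using \<mu>r(2)[rule_format, of "- T"] by simp
  then have "\<mu>r \<noteq> 0" using mr0 by (auto simp: jost_sol_def)
  define \<nu> where "\<nu> = inverse \<mu>r"
  have \<nu>: "norm \<nu> > 1" unfolding \<nu>_def using \<mu>r(1) \<open>\<mu>r \<noteq> 0\<close> by (simp add: norm_inverse one_less_inverse)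
  have W: "y1 T * y2' T - y1' T * y2 T = 1" using wronskian_const[OF u y1(1) y2(1), of T] y1 y2 by simp
  have e1: "F 0 * y1 T + G 0 * y2 T = \<mu> * F 0" "F 0 * y1' T + G 0 * y2' T = \<mu> * G 0"
    using rep[of T] \<mu>(2)[rule_format, of 0] \<mu>(3)[rule_format, of 0] unfolding F_def G_def by simp_all
  have e2: "Fr 0 * y1 T + Gr 0 * y2 T = \<nu> * Fr 0" "Fr 0 * y1' T + Gr 0 * y2' T = \<nu> * Gr 0"
    using rep_r[of T] \<mu>r(2)[rule_format, of "- T"] \<mu>r(3)[rule_format, of "- T"] \<open>\<mu>r \<noteq> 0\<close>
    unfolding Fr_def Gr_def \<nu>_def by (simp_all add: field_simps)
  have nz: "F 0 \<noteq> 0" "Fr 0 \<noteq> 0" using m0 mr0 F0 Fr0 by auto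
  have "\<rho>\<^sup>2 - (y1 T + y2' T) * \<rho> + 1 = 0" "norm \<rho> < 1"
    using \<rho> trace_outside_band[OF W e1 nz(1) \<mu>(1)] by auto
  note mono = monodromy_eigenvalues[OF W e1 nz(1) e2 nz(2) \<mu>(1) \<nu> this]
  have "y1 x + (\<rho> - y1 T) / y2 T * y2 x = jost_sol k m x / m 0"
    and "y1' x + (\<rho> - y1 T) / y2 T * y2' x = jost_sol_deriv u k m x / m 0" for x
    unfolding mono(4) using rep[of x] nz F0 by (simp_all add: F_def G_def field_simps)
  moreover have "y1 x + (inverse \<rho> - y1 T) / y2 T * y2 x = jost_sol k mr (- x) / mr 0"
    and "y1' x + (inverse \<rho> - y1 T) / y2 T * y2' x = - jost_sol_deriv (\<lambda>t. u (- t)) k mr (- x) / mr 0" for x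
    unfolding mono(5) using rep_r[of x] nz Fr0 by (simp_all add: Fr_def Gr_def ur_def field_simps)
  ultimately show ?thesis using m fixed mr fixed_r unfolding ur_def by blast
qed

lemma bloch_floquet_asymptotics:
  fixes y1 y1' y2 y2' :: "real \<Rightarrow> complex" and \<rho> :: complex and x :: real
  assumes u: "bounded_potential u M" and per: "\<And>t. u (t + T) = u t" and T: "T > 0"
    and y1: "is_solution u l y1 y1'" "y1 0 = 1" "y1' 0 = 0"
    and y2: "is_solution u l y2 y2'" "y2 0 = 0" "y2' 0 = 1"
    and l: "l = k\<^sup>2" and k: "Im k \<ge> 1" and c: "c > 0" "Im k \<ge> c * norm k"
    and q: "M / norm k \<le> 1/4" and kT: "exp (Im k * T) > 1 + exp T"
    and \<rho>: "y1 T + y2' T \<notin> complex_of_real ` {-2..2} \<Longrightarrow> \<rho>\<^sup>2 - (y1 T + y2' T) * \<rho> + 1 = 0 \<and> norm \<rho> < 1"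
  defines "U \<equiv> ivl_integral 0 x (\<lambda>t. complex_of_real (u t))"
  shows "norm (y1 x + (\<rho> - y1 T) / y2 T * y2 x - exp (\<i> * k * x) * (1 + U / (2 * \<i> * k)))
      \<le> 2 * (M * M + M / c) * (exp \<bar>x\<bar> + 1 + M * \<bar>x\<bar>) * norm (exp (\<i> * k * x) / l)"
    and "norm (y1 x + (inverse \<rho> - y1 T) / y2 T * y2 x - exp (- \<i> * k * x) * (1 - U / (2 * \<i> * k)))
      \<le> 2 * (M * M + M / c) * (exp \<bar>x\<bar> + 1 + M * \<bar>x\<bar>) * norm (exp (- \<i> * k * x) / l)"
    and "norm (y1' x + (\<rho> - y1 T) / y2 T * y2' x - exp (\<i> * k * x) * (\<i> * k))
      \<le> 8 * M * (exp \<bar>x\<bar> + 1) * norm (exp (\<i> * k * x))"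
    and "norm (y1' x + (inverse \<rho> - y1 T) / y2 T * y2' x - exp (- \<i> * k * x) * (- \<i> * k))
      \<le> 8 * M * (exp \<bar>x\<bar> + 1) * norm (exp (- \<i> * k * x))"
proof -
  obtain m mr where m: "exp_bounded 2 m" "\<forall>x. m x = 1 + jost_op u k m x"
    and mr: "exp_bounded 2 mr" "\<forall>x. mr x = 1 + jost_op (\<lambda>t. u (- t)) k mr x"
    and \<psi>: "\<forall>x. y1 x + (\<rho> - y1 T) / y2 T * y2 x = jost_sol k m x / m 0"
      "\<forall>x. y1' x + (\<rho> - y1 T) / y2 T * y2' x = jost_sol_deriv u k m x / m 0"
      "\<forall>x. y1 x + (inverse \<rho> - y1 T) / y2 T * y2 x = jost_sol k mr (- x) / mr 0"
      "\<forall>x. y1' x + (inverse \<rho> - y1 T) / y2 T * y2' x = - jost_sol_deriv (\<lambda>t. u (- t)) k mr (- x) / mr 0"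
    using bloch_floquet_representation[OF u per T y1 y2 l k q kT \<rho>] by blast
  note m = m(1) m(2)[rule_format] and mr = mr(1) mr(2)[rule_format] and \<psi> = \<psi>[rule_format]
  note ur = bounded_potential_reflect[OF u]
  have U: "ivl_integral 0 (- x) (\<lambda>t. complex_of_real (u (- t))) = - U"
    unfolding U_def using ivl_integral_reflect[of 0 x "\<lambda>t. complex_of_real (u (- t))"] by simp
  show "norm (y1 x + (\<rho> - y1 T) / y2 T * y2 x - exp (\<i> * k * x) * (1 + U / (2 * \<i> * k)))
      \<le> 2 * (M * M + M / c) * (exp \<bar>x\<bar> + 1 + M * \<bar>x\<bar>) * norm (exp (\<i> * k * x) / l)"
    unfolding \<psi> U_def l by (rule jost_sol_asymptotics[OF u k c q m])
  show "norm (y1 x + (inverse \<rho> - y1 T) / y2 T * y2 x - exp (- \<i> * k * x) * (1 - U / (2 * \<i> * k)))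
      \<le> 2 * (M * M + M / c) * (exp \<bar>x\<bar> + 1 + M * \<bar>x\<bar>) * norm (exp (- \<i> * k * x) / l)"
    using jost_sol_asymptotics[OF ur k c q mr, of "- x"] unfolding \<psi> U l by simp
  show "norm (y1' x + (\<rho> - y1 T) / y2 T * y2' x - exp (\<i> * k * x) * (\<i> * k))
      \<le> 8 * M * (exp \<bar>x\<bar> + 1) * norm (exp (\<i> * k * x))"
    unfolding \<psi> by (rule jost_sol_deriv_asymptotics[OF u k c q m])
  show "norm (y1' x + (inverse \<rho> - y1 T) / y2 T * y2' x - exp (- \<i> * k * x) * (- \<i> * k))
      \<le> 8 * M * (exp \<bar>x\<bar> + 1) * norm (exp (- \<i> * k * x))"
    using jost_sol_deriv_asymptotics[OF ur k c q mr, of "- x"] unfolding \<psi>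
    by (simp add: norm_minus_commute minus_divide_left[symmetric])
qed

section \<open>Large \<open>\<lambda>\<close> in \<open>\<Omega>\<^sub>s\<close>\<close>

lemma sqrt_cut_sq: "(sqrt_cut z)\<^sup>2 = z"
  unfolding sqrt_cut_def by (cases "0 \<le> Im z") simp_all

lemma norm_sqrt_cut: "norm (sqrt_cut z) = sqrt (norm z)"
  unfolding sqrt_cut_def by simp

lemma Im_sqrt_cut: "Im (sqrt_cut z) = sqrt ((norm z - Re z) / 2)"
  unfolding sqrt_cut_def by (cases "Im z = 0"; cases "Im z > 0") (auto simp: sgn_if)

lemma Re_le_if_in_Omega:
  assumes z: "z \<in> Omega s" and s: "s > 0"
  shows "s < pi" "Re z \<le> norm z * cos s"
proof -
  define \<theta> where "\<theta> = arg2pi z"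
  have th: "s < \<theta>" "\<theta> < 2 * pi - s" using z unfolding Omega_def \<theta>_def by auto
  show sp: "s < pi" using th by linarith
  have "- pi < Arg z" "Arg z \<le> pi" using Arg_bounded[of z] by auto
  then have t0: "0 \<le> \<theta>" and ct: "cos \<theta> = cos (Arg z)" unfolding \<theta>_def arg2pi_def by auto
  have "cos \<theta> \<le> cos s"
  proof (cases "\<theta> \<le> pi")
    case True
    then show ?thesis using cos_mono_le_eq[of \<theta> s] th t0 s sp by auto
  next
    case False
    then show ?thesis using cos_mono_le_eq[of "2 * pi - \<theta>" s] th s sp by auto
  qed
  moreover have "Re z = norm z * cos (Arg z)" using arg_cong[OF rcis_cmod_Arg[of z], of Re] by simp
  ultimately show "Re z \<le> norm z * cos s" unfolding ct[symmetric] by (simp add: mult_left_mono)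
qed

lemma Omega_filter_Im_sqrt_cut:
  assumes s: "s > 0"
  obtains c where "c > 0"
    "\<And>R. \<forall>\<^sub>F l in Omega_filter s. R \<le> Im (sqrt_cut l) \<and> c * norm (sqrt_cut l) \<le> Im (sqrt_cut l)"
proof (cases "s < pi")
  case False
  then have "Omega s = {}" using Re_le_if_in_Omega(1)[OF _ s] by blast
  then show ?thesis by (intro that[of 1]) (simp_all add: Omega_filter_def eventually_inf_principal)
next
  case True
  define c where "c = sqrt ((1 - cos s) / 2)"
  have "cos s < 1" using cos_mono_less_eq[of s 0] True s by simp
  then have c: "c > 0" unfolding c_def by simp
  have "c * norm (sqrt_cut l) \<le> Im (sqrt_cut l)" if l: "l \<in> Omega s" for l
  proof -
    have "c * norm (sqrt_cut l) = sqrt ((1 - cos s) / 2) * sqrt (norm l)"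
      unfolding c_def norm_sqrt_cut by (simp add: real_sqrt_mult mult.commute)
    also have "\<dots> = sqrt ((norm l - norm l * cos s) / 2)"
      by (simp add: real_sqrt_mult[symmetric] algebra_simps)
    also have "\<dots> \<le> sqrt ((norm l - Re l) / 2)"
      using Re_le_if_in_Omega(2)[OF l s] by (intro real_sqrt_le_mono) simp
    finally show ?thesis unfolding Im_sqrt_cut .
  qed
  moreover have "\<forall>\<^sub>F l in Omega_filter s. R \<le> Im (sqrt_cut l) \<and> c * norm (sqrt_cut l) \<le> Im (sqrt_cut l)" for R
    unfolding Omega_filter_def eventually_inf_principal eventually_at_infinity
  proof (intro exI[of _ "(R / c)\<^sup>2"] allI impI)
    fix l assume l: "(R / c)\<^sup>2 \<le> norm l" "l \<in> Omega s"
    have "R / c \<le> norm (sqrt_cut l)"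
      using real_sqrt_le_mono[OF l(1)] abs_ge_self[of "R / c"] unfolding norm_sqrt_cut real_sqrt_abs
      by linarith
    then have "R \<le> c * norm (sqrt_cut l)" using c by (simp add: divide_le_eq mult.commute)
    with calculation[OF l(2)] show "R \<le> Im (sqrt_cut l) \<and> c * norm (sqrt_cut l) \<le> Im (sqrt_cut l)"
      by simp
  qed
  ultimately show ?thesis using that c by blast
qed

lemma eventually_Omega_filter_large_root:
  assumes s: "s > 0" and T: "T > 0"
  obtains c where "c > 0" "\<forall>\<^sub>F l in Omega_filter s. 1 \<le> Im (sqrt_cut l) \<and>
    M / norm (sqrt_cut l) \<le> 1/4 \<and> 1 + exp T < exp (Im (sqrt_cut l) * T) \<and>
    c * norm (sqrt_cut l) \<le> Im (sqrt_cut l)"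
proof -
  obtain c where c: "c > 0"
    and sector: "\<And>R. \<forall>\<^sub>F l in Omega_filter s. R \<le> Im (sqrt_cut l) \<and> c * norm (sqrt_cut l) \<le> Im (sqrt_cut l)"
    using Omega_filter_Im_sqrt_cut[OF s] by blast
  have "1 \<le> Im k \<and> M / norm k \<le> 1/4 \<and> 1 + exp T < exp (Im k * T)"
    if "max 1 (max (4 * M) (ln (1 + exp T) / T + 1)) \<le> Im k" for k
  proof -
    have k: "1 \<le> Im k" "4 * M \<le> Im k" "ln (1 + exp T) / T + 1 \<le> Im k" using that by auto
    then have "4 * M \<le> norm k" using abs_Im_le_cmod[of k] by linarith
    then have "M / norm k \<le> 1/4" using k(1) by (auto simp: divide_le_eq)
    moreover have "ln (1 + exp T) < Im k * T" using k(3) T by (simp add: field_simps)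
    then have "1 + exp T < exp (Im k * T)" by (metis exp_less_mono exp_ln add_pos_pos exp_gt_zero zero_less_one)
    ultimately show ?thesis using k(1) by blast
  qed
  then show ?thesis
    using that[OF c eventually_mono[OF sector[of "max 1 (max (4 * M) (ln (1 + exp T) / T + 1))"]]] by blast
qed

lemma bounded_periodic_representative:
  fixes u :: "real \<Rightarrow> real"
  assumes u: "u \<in> borel_measurable lborel" and bound: "AE t in lborel. \<bar>u t\<bar> \<le> M"
    and per: "\<forall>t. u (t + T) = u t"
  shows "\<exists>u0. bounded_potential u0 \<bar>M\<bar> \<and> (\<forall>t. u0 (t + T) = u0 t) \<and> (AE t in lborel. u t = u0 t)"
proof (intro exI conjI)
  define u0 where "u0 t = (if \<bar>u t\<bar> \<le> \<bar>M\<bar> then u t else 0)" for t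
  have [measurable]: "u \<in> borel_measurable borel" using u by simp
  have "u0 \<in> borel_measurable borel" unfolding u0_def by measurable
  then show "bounded_potential u0 \<bar>M\<bar>" unfolding bounded_potential_def u0_def by auto
  show "\<forall>t. u0 (t + T) = u0 t" unfolding u0_def using per by simp
  show "AE t in lborel. u t = u0 t" using bound by eventually_elim (auto simp: u0_def)
qed

lemma is_sol_imp_is_solution:
  assumes sol: "is_sol u l a b y y'" and [measurable]: "u \<in> borel_measurable borel" "u0 \<in> borel_measurable borel"
    and ae: "AE t in lborel. u t = u0 t"
  shows "is_solution u0 l y y' \<and> y 0 = a \<and> y' 0 = b"
proof -
  have c: "continuous_on UNIV y" "continuous_on UNIV y'"
    and y: "y x = a + ivl_integral 0 x y'"
    and y': "y' x = b + ivl_integral 0 x (\<lambda>t. (complex_of_real (u t) - l) * y t)" for x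
    using sol unfolding is_sol_def ivl_integral_def by blast+
  have [measurable]: "y \<in> borel_measurable borel" by (rule borel_measurable_continuous_onI[OF c(1)])
  have "ivl_integral 0 x (\<lambda>t. (complex_of_real (u t) - l) * y t)
      = ivl_integral 0 x (\<lambda>t. (complex_of_real (u0 t) - l) * y t)" for x
    by (rule ivl_integral_cong_AE) (use ae in \<open>auto elim: eventually_mono\<close>)
  with c y y' y[of 0] y'[of 0] show ?thesis unfolding is_solution_def by simp
qed

lemma bloch_floquet_bigo:
  fixes y1 y1' y2 y2' :: "real \<Rightarrow> complex \<Rightarrow> complex" and x :: real
  assumes u: "bounded_potential u M" and per: "\<And>t. u (t + T) = u t" and T: "T > 0" and s: "s > 0"
    and y1: "\<And>l. is_solution u l (\<lambda>x. y1 x l) (\<lambda>x. y1' x l) \<and> y1 0 l = 1 \<and> y1' 0 l = 0"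
    and y2: "\<And>l. is_solution u l (\<lambda>x. y2 x l) (\<lambda>x. y2' x l) \<and> y2 0 l = 0 \<and> y2' 0 l = 1"
    and rho: "\<forall>l. l \<notin> spec T y1 y2' \<longrightarrow> (rho l)\<^sup>2 - Delta T y1 y2' l * rho l + 1 = 0 \<and> norm (rho l) < 1"
  defines "U \<equiv> ivl_integral 0 x (\<lambda>t. complex_of_real (u t))"
  shows "(\<lambda>l. psi_plus T rho y1 y2 x l - exp (\<i> * sqrt_cut l * x) * (1 + U / (2 * \<i> * sqrt_cut l)))
      \<in> O[Omega_filter s](\<lambda>l. exp (\<i> * sqrt_cut l * x) / l)"
    and "(\<lambda>l. psi_minus T rho y1 y2 x l - exp (- \<i> * sqrt_cut l * x) * (1 - U / (2 * \<i> * sqrt_cut l)))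
      \<in> O[Omega_filter s](\<lambda>l. exp (- \<i> * sqrt_cut l * x) / l)"
    and "(\<lambda>l. dpsi_plus T rho y1 y2 y1' y2' x l - exp (\<i> * sqrt_cut l * x) * (\<i> * sqrt_cut l))
      \<in> O[Omega_filter s](\<lambda>l. exp (\<i> * sqrt_cut l * x))"
    and "(\<lambda>l. dpsi_minus T rho y1 y2 y1' y2' x l - exp (- \<i> * sqrt_cut l * x) * (- \<i> * sqrt_cut l))
      \<in> O[Omega_filter s](\<lambda>l. exp (- \<i> * sqrt_cut l * x))"
proof -
  obtain c where c: "c > 0" and large: "\<forall>\<^sub>F l in Omega_filter s. 1 \<le> Im (sqrt_cut l) \<and>
      M / norm (sqrt_cut l) \<le> 1/4 \<and> 1 + exp T < exp (Im (sqrt_cut l) * T) \<and>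
      c * norm (sqrt_cut l) \<le> Im (sqrt_cut l)"
    by (rule eventually_Omega_filter_large_root[OF s T])
  define C1 where "C1 = 2 * (M * M + M / c) * (exp \<bar>x\<bar> + 1 + M * \<bar>x\<bar>)"
  define C2 where "C2 = 8 * M * (exp \<bar>x\<bar> + 1)"
  have pointwise: "norm (psi_plus T rho y1 y2 x l - exp (\<i> * sqrt_cut l * x) * (1 + U / (2 * \<i> * sqrt_cut l)))
        \<le> C1 * norm (exp (\<i> * sqrt_cut l * x) / l)
      \<and> norm (psi_minus T rho y1 y2 x l - exp (- \<i> * sqrt_cut l * x) * (1 - U / (2 * \<i> * sqrt_cut l)))
        \<le> C1 * norm (exp (- \<i> * sqrt_cut l * x) / l)
      \<and> norm (dpsi_plus T rho y1 y2 y1' y2' x l - exp (\<i> * sqrt_cut l * x) * (\<i> * sqrt_cut l))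
        \<le> C2 * norm (exp (\<i> * sqrt_cut l * x))
      \<and> norm (dpsi_minus T rho y1 y2 y1' y2' x l - exp (- \<i> * sqrt_cut l * x) * (- \<i> * sqrt_cut l))
        \<le> C2 * norm (exp (- \<i> * sqrt_cut l * x))"
    if "1 \<le> Im (sqrt_cut l) \<and> M / norm (sqrt_cut l) \<le> 1/4 \<and> 1 + exp T < exp (Im (sqrt_cut l) * T) \<and>
      c * norm (sqrt_cut l) \<le> Im (sqrt_cut l)" for l
  proof -
    have k: "1 \<le> Im (sqrt_cut l)" and q: "M / norm (sqrt_cut l) \<le> 1/4"
      and kT: "1 + exp T < exp (Im (sqrt_cut l) * T)" and ck: "c * norm (sqrt_cut l) \<le> Im (sqrt_cut l)"
      using that by auto
    have band: "(rho l)\<^sup>2 - (y1 T l + y2' T l) * rho l + 1 = 0 \<and> norm (rho l) < 1"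
      if "y1 T l + y2' T l \<notin> complex_of_real ` {-2..2}"
    proof -
      have "l \<notin> spec T y1 y2'" using that unfolding spec_def Delta_def by auto
      then show ?thesis using rho unfolding Delta_def by blast
    qed
    have s1: "is_solution u l (\<lambda>x. y1 x l) (\<lambda>x. y1' x l)" "y1 0 l = 1" "y1' 0 l = 0" using y1 by auto
    have s2: "is_solution u l (\<lambda>x. y2 x l) (\<lambda>x. y2' x l)" "y2 0 l = 0" "y2' 0 l = 1" using y2 by auto
    note bounds = bloch_floquet_asymptotics[where x = x, OF u per T s1 s2 sqrt_cut_sq[symmetric] k c ck q kT band]
    show ?thesis
      unfolding psi_plus_def psi_minus_def dpsi_plus_def dpsi_minus_def C1_def C2_def U_def
      using bounds by auto
  qed
  have ev: "\<forall>\<^sub>F l in Omega_filter s.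
      norm (psi_plus T rho y1 y2 x l - exp (\<i> * sqrt_cut l * x) * (1 + U / (2 * \<i> * sqrt_cut l)))
        \<le> C1 * norm (exp (\<i> * sqrt_cut l * x) / l)
      \<and> norm (psi_minus T rho y1 y2 x l - exp (- \<i> * sqrt_cut l * x) * (1 - U / (2 * \<i> * sqrt_cut l)))
        \<le> C1 * norm (exp (- \<i> * sqrt_cut l * x) / l)
      \<and> norm (dpsi_plus T rho y1 y2 y1' y2' x l - exp (\<i> * sqrt_cut l * x) * (\<i> * sqrt_cut l))
        \<le> C2 * norm (exp (\<i> * sqrt_cut l * x))
      \<and> norm (dpsi_minus T rho y1 y2 y1' y2' x l - exp (- \<i> * sqrt_cut l * x) * (- \<i> * sqrt_cut l))
        \<le> C2 * norm (exp (- \<i> * sqrt_cut l * x))"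
    by (rule eventually_mono[OF large pointwise])
  show "(\<lambda>l. psi_plus T rho y1 y2 x l - exp (\<i> * sqrt_cut l * x) * (1 + U / (2 * \<i> * sqrt_cut l)))
      \<in> O[Omega_filter s](\<lambda>l. exp (\<i> * sqrt_cut l * x) / l)"
    and "(\<lambda>l. psi_minus T rho y1 y2 x l - exp (- \<i> * sqrt_cut l * x) * (1 - U / (2 * \<i> * sqrt_cut l)))
      \<in> O[Omega_filter s](\<lambda>l. exp (- \<i> * sqrt_cut l * x) / l)"
    and "(\<lambda>l. dpsi_plus T rho y1 y2 y1' y2' x l - exp (\<i> * sqrt_cut l * x) * (\<i> * sqrt_cut l))
      \<in> O[Omega_filter s](\<lambda>l. exp (\<i> * sqrt_cut l * x))"
    and "(\<lambda>l. dpsi_minus T rho y1 y2 y1' y2' x l - exp (- \<i> * sqrt_cut l * x) * (- \<i> * sqrt_cut l))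
      \<in> O[Omega_filter s](\<lambda>l. exp (- \<i> * sqrt_cut l * x))"
    by (rule bigoI[OF eventually_mono[OF ev]], blast)+
qed

theorem lemma1:
  fixes T :: real and u :: "real \<Rightarrow> real"
    and y1 y1' y2 y2' :: "real \<Rightarrow> complex \<Rightarrow> complex"
    and rho :: "complex \<Rightarrow> complex"
  assumes T_pos: "T > 0"
    and u_meas: "u \<in> borel_measurable lborel"
    and u_bdd: "\<exists>M. AE t in lborel. \<bar>u t\<bar> \<le> M"
    and u_per: "\<forall>t. u (t + T) = u t"
    and sol1: "\<forall>l. is_sol u l 1 0 (\<lambda>x. y1 x l) (\<lambda>x. y1' x l)"
    and sol2: "\<forall>l. is_sol u l 0 1 (\<lambda>x. y2 x l) (\<lambda>x. y2' x l)"
    and rho_root: "\<forall>l. l \<notin> spec T y1 y2' \<longrightarrow>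
         (rho l)\<^sup>2 - Delta T y1 y2' l * rho l + 1 = 0 \<and> norm (rho l) < 1"
    and rho_analytic: "rho analytic_on (- spec T y1 y2')"
    and s_pos: "s > 0"
  shows
   "(\<lambda>l. psi_plus T rho y1 y2 x l
        - exp (\<i> * sqrt_cut l * x) * (1 + (LBINT t=ereal 0..ereal x. u t) / (2 * \<i> * sqrt_cut l)))
      \<in> O[Omega_filter s](\<lambda>l. exp (\<i> * sqrt_cut l * x) / l)
    \<and> (\<lambda>l. psi_minus T rho y1 y2 x l
        - exp (- \<i> * sqrt_cut l * x) * (1 - (LBINT t=ereal 0..ereal x. u t) / (2 * \<i> * sqrt_cut l)))
      \<in> O[Omega_filter s](\<lambda>l. exp (- \<i> * sqrt_cut l * x) / l)
    \<and> (\<lambda>l. dpsi_plus T rho y1 y2 y1' y2' x l - exp (\<i> * sqrt_cut l * x) * (\<i> * sqrt_cut l))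
      \<in> O[Omega_filter s](\<lambda>l. exp (\<i> * sqrt_cut l * x))
    \<and> (\<lambda>l. dpsi_minus T rho y1 y2 y1' y2' x l - exp (- \<i> * sqrt_cut l * x) * (- \<i> * sqrt_cut l))
      \<in> O[Omega_filter s](\<lambda>l. exp (- \<i> * sqrt_cut l * x))"
proof -
  obtain M where "AE t in lborel. \<bar>u t\<bar> \<le> M" using u_bdd by blast
  then obtain u0 where u0: "bounded_potential u0 \<bar>M\<bar>" "\<forall>t. u0 (t + T) = u0 t" "AE t in lborel. u t = u0 t"
    using bounded_periodic_representative[OF u_meas _ u_per] by blast
  have [measurable]: "u \<in> borel_measurable borel" "u0 \<in> borel_measurable borel"
    using u_meas u0(1) unfolding bounded_potential_def by auto
  note y1 = is_sol_imp_is_solution[OF sol1[rule_format] _ _ u0(3)]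
    and y2 = is_sol_imp_is_solution[OF sol2[rule_format] _ _ u0(3)]
  have "complex_of_real (LBINT t=ereal 0..ereal x. u t) = ivl_integral 0 x (\<lambda>t. complex_of_real (u0 t))"
    unfolding ivl_integral_def interval_lebesgue_integral_of_real[symmetric]
    by (rule interval_integral_cong_AE) (use u0(3) in \<open>auto elim: eventually_mono\<close>)
  then show ?thesis
    using bloch_floquet_bigo[OF u0(1) u0(2)[rule_format] T_pos s_pos y1 y2 rho_root, of x] by simp
qed

end
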